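(* For $j\ge 0$ let $S_j$ be the symmetric group of $J_j=\{1,\dots,j\}$ ($J_0=\varnothing$, $S_0$ trivial), let $G_j=S_j\times S_j$ and let $K_j=\{(\tau,\tau):\tau\in S_j\}\subset G_j$ be the diagonal subgroup. Let $G_j/\!/K_j$ be the set of orbits of $K_j$ acting on $G_j$ by conjugation, and let $\mathcal{C}=\coprod_{j\ge 0} G_j/\!/K_j$ (disjoint union, so a class remembers its index $j$). For $c\in G_j/\!/K_j$ with representative $g\in G_j$ and $N\ge 0$ define $A_N[c]\in\mathbb{C}(G_N)$ by $$A_N[c]=\frac{1}{(N-j)!}\sum_{\tau\in K_N}\tau^{-1}\tilde g\,\tau \quad\text{if } N\ge j,\qquad A_N[c]=0\quad\text{if } N<j,$$ where $\tilde g$ is $g$ regarded as an element of $G_N\supseteq G_j$. Then there exist non-negative integers $a^{e}_{c,d}$ ($c,d,e\in\mathcal{C}$), not depending on $N$ and with only finitely many $e$ having $a^e_{c,d}\neq 0$ for fixed $c,d$, such that: (i) for every $N\ge 0$ and all $c,d\in\mathcal{C}$, $A_N[c]*A_N[d]=\sum_{e\in\mathcal{C}} a^{e}_{c,d}\,A_N[e]$ in $\mathbb{C}(G_N)$; (ii) on the complex vector space $\mathcal{B}$ with basis $\{A[c]: c\in\mathcal{C}\}$, the formula $A[c]*A[d]=\sum_{e} a^e_{c,d}A[e]$ (extended bilinearly) defines a structure of an associative algebra.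
   Context: $\mathbb{C}(G)$ denotes the group algebra of a finite group $G$ with convolution $*$. $S_j$ is regarded as the subgroup of $S_N$ ($j\le N$) fixing all points of $J_N\setminus J_j$, and hence $G_j\subseteq G_N$. The element $A_N[c]$ does not depend on the choice of representative $g$. *)

theory Defs
  imports Complex_Main "HOL-Combinatorics.Permutations"
begin

type_synonym perm = "nat \<Rightarrow> nat"
type_synonym gel = "perm \<times> perm"
type_synonym cls = "nat \<times> gel set"       (* class: index j together with a K_j-orbit in G_j *)

text \<open>S_j: permutations of {1..j}, fixing all other naturals (so S_j \<subseteq> S_N for j \<le> N).\<close>
definition Sym :: "nat \<Rightarrow> perm set" where
  "Sym j = {p. p permutes {1..j}}"

definition Gr :: "nat \<Rightarrow> gel set" where
  "Gr j = Sym j \<times> Sym j"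

definition gmul :: "gel \<Rightarrow> gel \<Rightarrow> gel" where
  "gmul x y = (fst x \<circ> fst y, snd x \<circ> snd y)"

definition ginv :: "gel \<Rightarrow> gel" where
  "ginv x = (inv (fst x), inv (snd x))"

definition conjK :: "perm \<Rightarrow> gel \<Rightarrow> gel" where
  "conjK t g = gmul (ginv (t, t)) (gmul g (t, t))"

definition Korbit :: "nat \<Rightarrow> gel \<Rightarrow> gel set" where
  "Korbit j g = {conjK t g | t. t \<in> Sym j}"

definition classes :: "cls set" where
  "classes = {(j, Korbit j g) | j g. g \<in> Gr j}"

definition rep :: "cls \<Rightarrow> gel" where
  "rep c = (SOME g. g \<in> snd c)"

text \<open>Group algebra \<complex>(G_N): functions G_N \<rightarrow> \<complex> (zero outside G_N), with convolution.\<close>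
definition conv :: "nat \<Rightarrow> (gel \<Rightarrow> complex) \<Rightarrow> (gel \<Rightarrow> complex) \<Rightarrow> gel \<Rightarrow> complex" where
  "conv N f h x = (if x \<in> Gr N then (\<Sum>y\<in>Gr N. f y * h (gmul (ginv y) x)) else 0)"

definition AN :: "nat \<Rightarrow> cls \<Rightarrow> gel \<Rightarrow> complex" where
  "AN N c x = (if fst c \<le> N
     then (1 / of_nat (fact (N - fst c))) *
          (\<Sum>t\<in>Sym N. (if conjK t (rep c) = x then 1 else 0))
     else 0)"

text \<open>The abstract space \<B>: finitely supported coefficient vectors on the basis {A[c] | c \<in> \<C>}.\<close>
definition Bspace :: "(cls \<Rightarrow> complex) set" where
  "Bspace = {u. (\<forall>c. c \<notin> classes \<longrightarrow> u c = 0) \<and> finite {c. u c \<noteq> 0}}"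

definition Bmul :: "(cls \<Rightarrow> cls \<Rightarrow> cls \<Rightarrow> nat) \<Rightarrow> (cls \<Rightarrow> complex) \<Rightarrow> (cls \<Rightarrow> complex) \<Rightarrow> cls \<Rightarrow> complex" where
  "Bmul a u v = (\<lambda>e. if e \<in> classes then
      (\<Sum>c\<in>{c. u c \<noteq> 0}. \<Sum>d\<in>{d. v d \<noteq> 0}. u c * v d * of_nat (a c d e)) else 0)"

definition Bbasis :: "cls \<Rightarrow> cls \<Rightarrow> complex" where
  "Bbasis c = (\<lambda>e. if e = c then 1 else 0)"

end

(*
  Counting conjugators shows that A_N[c](x) is the number of embeddings of {1..j} into {1..N}
  that transport the representative g of c to x, since every such embedding extends to exactly
  (N - j)! permutations of {1..N}.  Hence (A_N[c] * A_N[d])(x) counts pairs of embeddings whose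
  transported representatives multiply to x.  Grouping these pairs by the union U of their images
  and relabelling U as {1..|U|} leaves pairs of embeddings into {1..l} whose images cover {1..l};
  this description no longer involves N.  The group S_l acts freely on such covering pairs,
  compatibly with conjugation of their products, so the number of covering pairs with product y
  depends only on the class e of y and is a multiple of the order of the stabiliser of y; the
  quotient is a^e_{c,d}.  Relabelling a single embedding in the same way expresses A_N[e] through
  covering data, which gives (i).  Associativity of convolution then yields the associativity
  identity for the a^e_{c,d}, because the functions A_N[e] are linearly independent as N ranges
  over all naturals; this gives (ii).
*)

theory Submission
  imports Defs
begin

lemma card_eq_sum_card_fibres:
  assumes "finite A" "finite T" "h ` A \<subseteq> T"
  shows "card A = (\<Sum>y\<in>T. card {a \<in> A. h a = y})"
  using sum.group[OF assms, of "\<lambda>_. 1::nat"] by simp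

lemma card_Collect_eq_sum_card_fibres:
  assumes "finite A" "finite T" "h ` A \<subseteq> T"
  shows "card {a \<in> A. P (h a)} = (\<Sum>y\<in>{y \<in> T. P y}. card {a \<in> A. h a = y})"
proof -
  have "card {a \<in> A. P (h a)} = (\<Sum>y\<in>{y \<in> T. P y}. card {a \<in> {a \<in> A. P (h a)}. h a = y})"
    using assms by (intro card_eq_sum_card_fibres) auto
  also have "\<dots> = (\<Sum>y\<in>{y \<in> T. P y}. card {a \<in> A. h a = y})"
    by (rule sum.cong[OF refl], rule arg_cong[where f = card]) blast
  finally show ?thesis .
qed

lemma bij_betw_Collect: "bij_betw f A B \<Longrightarrow> bij_betw f {a \<in> A. Q (f a)} {b \<in> B. Q b}"
  unfolding bij_betw_def inj_on_def by (auto simp: image_iff)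

lemma sum_swap_outer_innermost:
  "(\<Sum>x\<in>P. \<Sum>c\<in>A. \<Sum>d\<in>B. F x c d) = (\<Sum>c\<in>A. \<Sum>d\<in>B. \<Sum>x\<in>P. F x c d)"
  by (subst sum.swap, rule sum.cong[OF refl], rule sum.swap)

definition supp :: "('a \<Rightarrow> 'b::zero) \<Rightarrow> 'a set" where
  "supp f = {x. f x \<noteq> 0}"

lemma sum_supp_superset:
  fixes g :: "'a \<Rightarrow> 'b::semiring_0"
  assumes "finite A" "supp g \<subseteq> A"
  shows "(\<Sum>x\<in>A. g x * h x) = (\<Sum>x\<in>supp g. g x * h x)"
  using assms by (intro sum.mono_neutral_right) (auto simp: supp_def)

lemma map_permutation_permutes_subset:
  "inj_on f A \<Longrightarrow> f ` A \<subseteq> B \<Longrightarrow> p permutes A \<Longrightarrow> map_permutation A f p permutes B"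
  by (metis bij_betw_imageI map_permutation_permutes permutes_subset)

lemma map_permutation_superset:
  assumes "q permutes B" "B \<subseteq> C" "inj_on e C"
  shows "map_permutation C e q = map_permutation B e q"
proof
  fix y
  show "map_permutation C e q y = map_permutation B e q y"
  proof (cases "y \<in> e ` C")
    case True
    then obtain x where x: "x \<in> C" "y = e x" by blast
    have inB: "inj_on e B" using assms(2,3) by (rule inj_on_subset[rotated])
    show ?thesis
    proof (cases "x \<in> B")
      case True
      then show ?thesis using x assms inB by (simp add: map_permutation_apply)
    next
      case False
      then have "q x = x" using assms(1) by (simp add: permutes_not_in)
      moreover have "y \<notin> e ` B" using False x assms(2,3) by (auto simp: inj_on_def)
      ultimately show ?thesis using x assms by (simp add: map_permutation_apply map_permutation_def)
    qed
  next
    case False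
    then have "y \<notin> e ` B" using assms(2) by auto
    then show ?thesis using False by (simp add: map_permutation_def)
  qed
qed

lemma map_permutation_compose_subset:
  assumes "inj_on f A" "f ` A \<subseteq> B" "inj_on g B" "p permutes A"
  shows "map_permutation B g (map_permutation A f p) = map_permutation A (g \<circ> f) p"
proof -
  have b: "bij_betw f A (f ` A)" using assms(1) by (simp add: bij_betw_def)
  have "map_permutation B g (map_permutation A f p) = map_permutation (f ` A) g (map_permutation A f p)"
    using map_permutation_permutes[OF b assms(4)] assms(2,3) by (rule map_permutation_superset)
  also have "\<dots> = map_permutation A (g \<circ> f) p"
    using b inj_on_subset[OF assms(3,2)] by (rule map_permutation_compose)
  finally show ?thesis .
qed

lemma map_permutation_inv_bij:
  assumes "bij t" "p permutes A"
  shows "map_permutation A (inv t) p = inv t \<circ> p \<circ> t"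
proof
  fix y
  have it: "inj_on (inv t) A"
    using bij_is_inj[OF bij_imp_bij_inv[OF assms(1)]] by (rule inj_on_subset) simp
  show "map_permutation A (inv t) p y = (inv t \<circ> p \<circ> t) y"
  proof (cases "t y \<in> A")
    case True
    have "y = inv t (t y)" using assms(1) by (simp add: bij_is_inj)
    then show ?thesis using map_permutation_apply[OF it True, of p] by simp
  next
    case False
    then have "p (t y) = t y" using assms(2) by (simp add: permutes_not_in)
    moreover have "y \<notin> inv t ` A" using False assms(1) by (auto simp: bij_is_surj surj_f_inv_f)
    ultimately show ?thesis using assms(1) by (simp add: map_permutation_def bij_is_inj)
  qed
qed

section \<open>The groups G_j and the conjugation action of K_j\<close>

lemma finite_Sym: "finite (Sym j)"
  unfolding Sym_def by (rule finite_permutations) simp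

lemma id_in_Sym: "id \<in> Sym j"
  by (simp add: Sym_def)

lemma Sym_compose: "p \<in> Sym j \<Longrightarrow> q \<in> Sym j \<Longrightarrow> p \<circ> q \<in> Sym j"
  unfolding Sym_def by (simp add: permutes_compose)

lemma Sym_inv: "p \<in> Sym j \<Longrightarrow> inv p \<in> Sym j"
  unfolding Sym_def by (simp add: permutes_inv)

lemma Sym_bij: "p \<in> Sym j \<Longrightarrow> bij p"
  unfolding Sym_def by (simp add: permutes_bij)

lemma card_Sym_inv: "card {t \<in> Sym N. P (inv t)} = card {u \<in> Sym N. P u}"
proof (rule bij_betw_same_card[of inv])
  show "bij_betw inv {t \<in> Sym N. P (inv t)} {u \<in> Sym N. P u}"
    by (rule bij_betwI[of _ _ _ inv]) (auto simp: Sym_inv Sym_bij inv_inv_eq)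
qed

lemma finite_Gr: "finite (Gr j)"
  unfolding Gr_def using finite_Sym by simp

lemma GrE:
  assumes "g \<in> Gr j"
  obtains p q where "g = (p, q)" "p permutes {1..j}" "q permutes {1..j}"
  using assms unfolding Gr_def Sym_def by (cases g) auto

lemma gmul_closed: "x \<in> Gr N \<Longrightarrow> y \<in> Gr N \<Longrightarrow> gmul x y \<in> Gr N"
  unfolding Gr_def gmul_def by (auto intro: Sym_compose)

lemma ginv_closed: "x \<in> Gr N \<Longrightarrow> ginv x \<in> Gr N"
  unfolding Gr_def ginv_def by (auto intro: Sym_inv)

lemma gmul_assoc: "gmul (gmul x y) z = gmul x (gmul y z)"
  by (simp add: gmul_def o_assoc)

lemma ginv_gmul_cancel: "x \<in> Gr N \<Longrightarrow> gmul (ginv x) (gmul x y) = y"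
  unfolding Gr_def gmul_def ginv_def
  by (auto simp: o_assoc Sym_bij bij_is_inj)

lemma gmul_ginv_cancel: "x \<in> Gr N \<Longrightarrow> gmul x (gmul (ginv x) y) = y"
  unfolding Gr_def gmul_def ginv_def
  by (auto simp: o_assoc Sym_bij bij_is_surj surj_iff[THEN iffD1])

lemma ginv_gmul: "x \<in> Gr N \<Longrightarrow> y \<in> Gr N \<Longrightarrow> ginv (gmul x y) = gmul (ginv y) (ginv x)"
  unfolding Gr_def gmul_def ginv_def by (auto simp: o_inv_distrib Sym_bij)

lemma gmul_eq_iff: "a \<in> Gr N \<Longrightarrow> gmul a z = x \<longleftrightarrow> z = gmul (ginv a) x"
  using ginv_gmul_cancel gmul_ginv_cancel by metis

lemma bij_betw_gmul_left: "z \<in> Gr N \<Longrightarrow> bij_betw (gmul z) (Gr N) (Gr N)"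
  by (rule bij_betwI[of _ _ _ "gmul (ginv z)"])
     (auto intro: gmul_closed ginv_closed simp: ginv_gmul_cancel gmul_ginv_cancel)

lemma conjK_altdef: "conjK t g = (inv t \<circ> fst g \<circ> t, inv t \<circ> snd g \<circ> t)"
  by (simp add: conjK_def gmul_def ginv_def o_assoc)

lemma conjK_closed: "t \<in> Sym N \<Longrightarrow> g \<in> Gr N \<Longrightarrow> conjK t g \<in> Gr N"
  unfolding conjK_def by (intro gmul_closed ginv_closed) (auto simp: Gr_def)

lemma conjK_id [simp]: "conjK id g = g"
  by (simp add: conjK_altdef)

lemma conjK_conjK: "bij t \<Longrightarrow> bij s \<Longrightarrow> conjK s (conjK t g) = conjK (t \<circ> s) g"
  by (simp add: conjK_altdef o_inv_distrib o_assoc)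

lemma conjK_inv_conjK: "bij t \<Longrightarrow> conjK (inv t) (conjK t g) = g"
  by (simp add: conjK_conjK bij_imp_bij_inv bij_is_surj surj_iff[THEN iffD1])

lemma Korbit_altdef: "Korbit j g = (\<lambda>t. conjK t g) ` Sym j"
  unfolding Korbit_def by blast

lemma mem_Korbit_self: "g \<in> Korbit j g"
  unfolding Korbit_altdef using id_in_Sym conjK_id by (metis image_eqI)

lemma Korbit_subset_Gr: "g \<in> Gr j \<Longrightarrow> Korbit j g \<subseteq> Gr j"
  unfolding Korbit_altdef using conjK_closed by blast

lemma Korbit_conjK:
  assumes "t \<in> Sym j"
  shows "Korbit j (conjK t g) = Korbit j g"
proof -
  have Sym_image: "(\<circ>) t ` Sym j = Sym j"
  proof (intro equalityI subsetI)
    fix s assume s: "s \<in> Sym j"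
    have "s = t \<circ> (inv t \<circ> s)"
      using Sym_bij[OF assms] by (simp add: o_assoc bij_is_surj surj_iff[THEN iffD1])
    moreover have "inv t \<circ> s \<in> Sym j" using Sym_compose[OF Sym_inv[OF assms] s] .
    ultimately show "s \<in> (\<circ>) t ` Sym j" by (rule image_eqI)
  next
    fix s assume "s \<in> (\<circ>) t ` Sym j"
    then show "s \<in> Sym j" using Sym_compose[OF assms] by blast
  qed
  have "Korbit j (conjK t g) = (\<lambda>s. conjK (t \<circ> s) g) ` Sym j"
    unfolding Korbit_altdef using conjK_conjK[OF Sym_bij[OF assms] Sym_bij]
    by (rule image_cong[OF refl])
  also have "\<dots> = (\<lambda>u. conjK u g) ` ((\<circ>) t ` Sym j)"
    by (simp add: image_image)
  finally show ?thesis unfolding Sym_image Korbit_altdef .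
qed

lemma Korbit_eq:
  assumes "y \<in> Korbit j g"
  shows "Korbit j y = Korbit j g"
proof -
  obtain t where "t \<in> Sym j" "y = conjK t g"
    using assms unfolding Korbit_altdef by blast
  then show ?thesis using Korbit_conjK by simp
qed

lemma rep_in_class:
  assumes "c \<in> classes"
  shows "rep c \<in> snd c"
proof -
  obtain j g where "c = (j, Korbit j g)" using assms unfolding classes_def by blast
  then show ?thesis
    unfolding rep_def using someI[of "\<lambda>x. x \<in> Korbit j g" g] mem_Korbit_self by simp
qed

lemma rep_in_Gr:
  assumes "c \<in> classes"
  shows "rep c \<in> Gr (fst c)"
proof -
  obtain j g where c: "c = (j, Korbit j g)" and g: "g \<in> Gr j"
    using assms unfolding classes_def by blast
  have "rep c \<in> Korbit j g" using rep_in_class[OF assms] c by simp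
  then show ?thesis using Korbit_subset_Gr[OF g] c by auto
qed

lemma class_eq_Korbit_rep:
  assumes "c \<in> classes"
  shows "c = (fst c, Korbit (fst c) (rep c))"
proof -
  obtain j g where "c = (j, Korbit j g)" using assms unfolding classes_def by blast
  then show ?thesis using rep_in_class[OF assms] Korbit_eq by auto
qed

section \<open>A_N counts embeddings\<close>

definition embeddings :: "nat \<Rightarrow> nat \<Rightarrow> perm set" where
  "embeddings j N = {\<iota> \<in> {1..j} \<rightarrow>\<^sub>E {1..N}. inj_on \<iota> {1..j}}"

definition push :: "nat \<Rightarrow> perm \<Rightarrow> gel \<Rightarrow> gel" where
  "push j \<iota> g = (map_permutation {1..j} \<iota> (fst g), map_permutation {1..j} \<iota> (snd g))"

lemma finite_embeddings: "finite (embeddings j N)"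
  unfolding embeddings_def by (simp add: finite_PiE)

lemma embeddingsD:
  assumes "\<iota> \<in> embeddings j N"
  shows "inj_on \<iota> {1..j}" "\<iota> ` {1..j} \<subseteq> {1..N}" "i \<notin> {1..j} \<Longrightarrow> \<iota> i = undefined"
  using assms unfolding embeddings_def by (auto simp: PiE_def extensional_def)

lemma embeddings_le: "\<iota> \<in> embeddings j N \<Longrightarrow> j \<le> N"
  using card_inj_on_le[OF embeddingsD(1,2)] by fastforce

lemma restrict_in_embeddings:
  assumes "inj_on u {1..j}" "u ` {1..j} \<subseteq> {1..N}"
  shows "restrict u {1..j} \<in> embeddings j N"
proof -
  have "restrict u {1..j} \<in> {1..j} \<rightarrow>\<^sub>E {1..N}"
    using assms(2) unfolding restrict_PiE_iff by blast
  moreover have "inj_on (restrict u {1..j}) {1..j}"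
    using assms(1) inj_on_cong[of "{1..j}" "restrict u {1..j}" u] by simp
  ultimately show ?thesis
    unfolding embeddings_def by simp
qed

lemma restrict_embedding: "\<iota> \<in> embeddings j N \<Longrightarrow> restrict \<iota> {1..j} = \<iota>"
  using embeddingsD(3) by (fastforce simp: restrict_def)

lemma embeddings_0: "embeddings 0 N = {\<lambda>_. undefined}"
  unfolding embeddings_def by simp

lemma image_self_embedding: "\<sigma> \<in> embeddings l l \<Longrightarrow> \<sigma> ` {1..l} = {1..l}"
  by (metis card_image card_subset_eq embeddingsD(1,2) finite_atLeastAtMost)

lemma push_closed:
  assumes "inj_on \<iota> {1..j}" "\<iota> ` {1..j} \<subseteq> {1..N}" "g \<in> Gr j"
  shows "push j \<iota> g \<in> Gr N"
proof -
  obtain p q where "g = (p, q)" "p permutes {1..j}" "q permutes {1..j}"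
    using assms(3) by (rule GrE)
  then show ?thesis
    using map_permutation_permutes_subset[OF assms(1,2)] by (simp add: push_def Gr_def Sym_def)
qed

lemma push_embedding_closed: "\<iota> \<in> embeddings j N \<Longrightarrow> g \<in> Gr j \<Longrightarrow> push j \<iota> g \<in> Gr N"
  by (rule push_closed[OF embeddingsD(1,2)])

lemma push_gmul:
  assumes "inj_on \<iota> {1..j}" "y \<in> Gr j" "z \<in> Gr j"
  shows "push j \<iota> (gmul y z) = gmul (push j \<iota> y) (push j \<iota> z)"
proof -
  obtain r s where z: "z = (r, s)" and r: "r permutes {1..j}" and s: "s permutes {1..j}"
    using assms(3) by (rule GrE)
  show ?thesis
    using map_permutation_compose'[OF assms(1) r] map_permutation_compose'[OF assms(1) s]
    by (simp add: z push_def gmul_def)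
qed

lemma push_cong:
  assumes "\<And>i. i \<in> {1..j} \<Longrightarrow> \<iota> i = \<kappa> i" "inj_on \<iota> {1..j}" "g \<in> Gr j"
  shows "push j \<iota> g = push j \<kappa> g"
proof -
  obtain p q where "g = (p, q)" "p permutes {1..j}" "q permutes {1..j}"
    using assms(3) by (rule GrE)
  then show ?thesis
    unfolding push_def using map_permutation_cong[OF assms(2) _ refl assms(1)] by simp
qed

lemma push_push:
  assumes "\<alpha> \<in> embeddings j l" "inj_on e {1..l}" "g \<in> Gr j"
  shows "push l e (push j \<alpha> g) = push j (restrict (e \<circ> \<alpha>) {1..j}) g"
proof -
  have "push l e (push j \<alpha> g) = push j (e \<circ> \<alpha>) g"
    using assms(3) map_permutation_compose_subset[OF embeddingsD(1,2)[OF assms(1)] assms(2)]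
    unfolding push_def Gr_def Sym_def by auto
  also have "\<dots> = push j (restrict (e \<circ> \<alpha>) {1..j}) g"
    using embeddingsD(1,2)[OF assms(1)] inj_on_subset[OF assms(2)] assms(3)
    by (intro push_cong comp_inj_on) auto
  finally show ?thesis .
qed

lemma conjK_eq_push:
  assumes "bij t" "g \<in> Gr j"
  shows "conjK t g = push j (inv t) g"
proof -
  obtain p q where "g = (p, q)" "p permutes {1..j}" "q permutes {1..j}"
    using assms(2) by (rule GrE)
  then show ?thesis
    by (simp add: conjK_altdef push_def map_permutation_inv_bij[OF assms(1)])
qed

lemma extend_embedding:
  assumes "\<iota> \<in> embeddings j N"
  obtains u where "u permutes {1..N}" "\<And>i. i \<in> {1..j} \<Longrightarrow> u i = \<iota> i"
proof -
  let ?A = "{1..j}" and ?S = "{1..N}" and ?B = "\<iota> ` {1..j}"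
  have inj: "inj_on \<iota> ?A" and BS: "?B \<subseteq> ?S" using embeddingsD[OF assms] by auto
  have AS: "?A \<subseteq> ?S" using embeddings_le[OF assms] by auto
  have "card (?S - ?A) = card (?S - ?B)"
    using AS BS inj by (simp add: card_Diff_subset card_image)
  then obtain h where h: "bij_betw h (?S - ?A) (?S - ?B)"
    using finite_same_card_bij[of "?S - ?A" "?S - ?B"] by auto
  define f where "f x = (if x \<in> ?A then \<iota> x else h x)" for x
  have "bij_betw f ?A ?B"
    by (rule bij_betw_cong[THEN iffD2, OF _ bij_betw_imageI[OF inj refl]]) (simp add: f_def)
  moreover have "bij_betw f (?S - ?A) (?S - ?B)"
    by (rule bij_betw_cong[THEN iffD2, OF _ h]) (simp add: f_def)
  ultimately have "bij_betw f (?A \<union> (?S - ?A)) (?B \<union> (?S - ?B))"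
    by (rule bij_betw_combine) auto
  moreover have "?A \<union> (?S - ?A) = ?S" "?B \<union> (?S - ?B) = ?S" using AS BS by auto
  ultimately have "restrict_id f ?S permutes ?S"
    by (intro permutes_restrict_id) simp
  moreover have "restrict_id f ?S i = \<iota> i" if "i \<in> ?A" for i
    using that AS by (auto simp: f_def)
  ultimately show ?thesis by (rule that)
qed

lemma card_extensions:
  assumes "\<iota> \<in> embeddings j N"
  shows "card {u \<in> Sym N. restrict u {1..j} = \<iota>} = fact (N - j)"
proof -
  obtain u0 where u0: "u0 permutes {1..N}" "\<And>i. i \<in> {1..j} \<Longrightarrow> u0 i = \<iota> i"
    using extend_embedding[OF assms] by blast
  have bu: "bij u0" using u0(1) by (rule permutes_bij)
  let ?F = "{u. u permutes {1..N} \<and> (\<forall>i\<in>{1..j}. u i = u0 i)}"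
  let ?P = "{s. s permutes {Suc j..N}}"
  have "\<iota> = restrict u0 {1..j}"
    using restrict_embedding[OF assms] u0(2) by (metis restrict_ext)
  then have F: "{u \<in> Sym N. restrict u {1..j} = \<iota>} = ?F"
    unfolding Sym_def by (auto simp: fun_eq_iff restrict_def)
  have "(\<circ>) u0 ` ?P = ?F"
  proof (intro equalityI subsetI)
    fix v assume "v \<in> (\<circ>) u0 ` ?P"
    then obtain s where s: "s permutes {Suc j..N}" "v = u0 \<circ> s" by blast
    have "s permutes {1..N}" using s(1) by (rule permutes_subset) auto
    then show "v \<in> ?F" using s u0(1) by (auto simp: permutes_compose permutes_not_in)
  next
    fix u assume u: "u \<in> ?F"
    have "inv u0 \<circ> u permutes {1..N}"
      using u permutes_inv[OF u0(1)] by (simp add: permutes_compose)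
    moreover have "(inv u0 \<circ> u) x = x" if "x \<in> {1..j}" for x
      using u that bu by (simp add: bij_is_inj)
    ultimately have "inv u0 \<circ> u permutes {1..N} - {1..j}"
      unfolding permutes_def by blast
    moreover have "{1..N} - {1..j} = {Suc j..N}" by auto
    moreover have "u = u0 \<circ> (inv u0 \<circ> u)"
      using bu by (simp add: o_assoc bij_is_surj surj_iff[THEN iffD1])
    ultimately show "u \<in> (\<circ>) u0 ` ?P" by auto
  qed
  moreover have "inj_on ((\<circ>) u0) ?P"
    using bu by (intro inj_onI) (metis bij_is_inj inv_o_cancel o_assoc id_comp)
  ultimately show ?thesis
    unfolding F
    by (metis card_image card_permutations finite_atLeastAtMost card_atLeastAtMost diff_Suc_Suc)
qed

lemma card_conjugators:
  assumes "j \<le> N" "g \<in> Gr j"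
  shows "card {t \<in> Sym N. conjK t g = x} = fact (N - j) * card {\<iota> \<in> embeddings j N. push j \<iota> g = x}"
proof -
  let ?r = "\<lambda>u. restrict u {1..j}"
  have r_emb: "?r u \<in> embeddings j N" if "u \<in> Sym N" for u
  proof (rule restrict_in_embeddings)
    have u: "u permutes {1..N}" using that by (simp add: Sym_def)
    show "inj_on u {1..j}" using permutes_inj_on[OF u] .
    show "u ` {1..j} \<subseteq> {1..N}" using assms(1) permutes_image[OF u] by auto
  qed
  have "conjK t g = push j (?r (inv t)) g" if "t \<in> Sym N" for t
  proof -
    have "inj_on (inv t) {1..j}"
      using Sym_bij[OF Sym_inv[OF that]] by (meson bij_is_inj inj_on_subset subset_UNIV)
    then have "push j (inv t) g = push j (?r (inv t)) g"
      by (intro push_cong[OF _ _ assms(2)]) simp_all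
    then show ?thesis using conjK_eq_push[OF Sym_bij[OF that] assms(2)] by simp
  qed
  then have "card {t \<in> Sym N. conjK t g = x} = card {t \<in> Sym N. push j (?r (inv t)) g = x}"
    by (intro arg_cong[where f = card]) auto
  also have "\<dots> = card {u \<in> Sym N. push j (?r u) g = x}"
    by (rule card_Sym_inv)
  also have "\<dots> = (\<Sum>\<iota>\<in>{\<iota> \<in> embeddings j N. push j \<iota> g = x}. card {u \<in> Sym N. ?r u = \<iota>})"
    using r_emb by (intro card_Collect_eq_sum_card_fibres finite_Sym finite_embeddings) blast
  also have "\<dots> = (\<Sum>\<iota>\<in>{\<iota> \<in> embeddings j N. push j \<iota> g = x}. fact (N - j))"
    using card_extensions by (intro sum.cong) auto
  finally show ?thesis by simp
qed

lemma AN_eq_card_embeddings: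
  assumes "c \<in> classes"
  shows "AN N c x = of_nat (card {\<iota> \<in> embeddings (fst c) N. push (fst c) \<iota> (rep c) = x})"
proof (cases "fst c \<le> N")
  case True
  have "AN N c x = of_nat (card {t \<in> Sym N. conjK t (rep c) = x}) / of_nat (fact (N - fst c))"
    using True finite_Sym by (simp add: AN_def sum.inter_filter[symmetric])
  then show ?thesis
    using card_conjugators[OF True rep_in_Gr[OF assms]] by simp
next
  case False
  then have "{\<iota> \<in> embeddings (fst c) N. push (fst c) \<iota> (rep c) = x} = {}"
    using embeddings_le by fastforce
  then show ?thesis using False by (simp only: AN_def if_False card.empty of_nat_0)
qed

section \<open>Products of the A_N and covering pairs\<close>

definition push_product :: "nat \<Rightarrow> nat \<Rightarrow> gel \<Rightarrow> gel \<Rightarrow> perm \<times> perm \<Rightarrow> gel" where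
  "push_product j k g g' \<alpha> = gmul (push j (fst \<alpha>) g) (push k (snd \<alpha>) g')"

lemma push_product_closed:
  "\<alpha> \<in> embeddings j l \<times> embeddings k l \<Longrightarrow> g \<in> Gr j \<Longrightarrow> g' \<in> Gr k \<Longrightarrow> push_product j k g g' \<alpha> \<in> Gr l"
  unfolding push_product_def by (intro gmul_closed push_embedding_closed) auto

lemma conv_AN_eq_card_pairs:
  assumes c: "c \<in> classes" and d: "d \<in> classes"
  shows "conv N (AN N c) (AN N d) x =
    of_nat (card {\<iota> \<in> embeddings (fst c) N \<times> embeddings (fst d) N.
                    push_product (fst c) (fst d) (rep c) (rep d) \<iota> = x})"
proof -
  let ?j = "fst c" and ?k = "fst d" and ?g = "rep c" and ?g' = "rep d"
  let ?E = "embeddings ?j N" and ?E' = "embeddings ?k N"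
  let ?B = "\<lambda>y. card {\<kappa> \<in> ?E'. push ?k \<kappa> ?g' = gmul (ginv y) x}"
  have g: "?g \<in> Gr ?j" using rep_in_Gr[OF c] .
  have g': "?g' \<in> Gr ?k" using rep_in_Gr[OF d] .
  show ?thesis
  proof (cases "x \<in> Gr N")
    case False
    then have "{\<iota> \<in> ?E \<times> ?E'. push_product ?j ?k ?g ?g' \<iota> = x} = {}"
      using push_product_closed[OF _ g g'] by blast
    then show ?thesis using False by (simp only: conv_def if_False card.empty of_nat_0)
  next
    case x: True
    have "conv N (AN N c) (AN N d) x
        = (\<Sum>y\<in>Gr N. of_nat (card {\<iota> \<in> ?E. push ?j \<iota> ?g = y} * ?B y))"
      using x by (simp add: conv_def AN_eq_card_embeddings[OF c] AN_eq_card_embeddings[OF d])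
    also have "\<dots> = (\<Sum>y\<in>Gr N. \<Sum>\<iota>\<in>{\<iota> \<in> ?E. push ?j \<iota> ?g = y}. of_nat (?B (push ?j \<iota> ?g)))"
      by (rule sum.cong[OF refl]) simp
    also have "\<dots> = (\<Sum>\<iota>\<in>?E. of_nat (?B (push ?j \<iota> ?g)))"
      using push_embedding_closed[OF _ g] by (intro sum.group finite_embeddings finite_Gr) blast
    also have "\<dots> = (\<Sum>\<iota>\<in>?E. of_nat (card {\<kappa> \<in> ?E'. gmul (push ?j \<iota> ?g) (push ?k \<kappa> ?g') = x}))"
      using gmul_eq_iff[OF push_embedding_closed[OF _ g]] by (intro sum.cong refl) simp
    also have "\<dots> = of_nat (card (SIGMA \<iota>:?E. {\<kappa> \<in> ?E'. gmul (push ?j \<iota> ?g) (push ?k \<kappa> ?g') = x}))"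
      by (simp add: finite_embeddings)
    also have "(SIGMA \<iota>:?E. {\<kappa> \<in> ?E'. gmul (push ?j \<iota> ?g) (push ?k \<kappa> ?g') = x})
        = {\<iota> \<in> ?E \<times> ?E'. push_product ?j ?k ?g ?g' \<iota> = x}"
      unfolding push_product_def by auto
    finally show ?thesis .
  qed
qed

definition joint_image :: "nat \<Rightarrow> nat \<Rightarrow> perm \<times> perm \<Rightarrow> nat set" where
  "joint_image j k \<alpha> = fst \<alpha> ` {1..j} \<union> snd \<alpha> ` {1..k}"

definition covering_pairs :: "nat \<Rightarrow> nat \<Rightarrow> nat \<Rightarrow> (perm \<times> perm) set" where
  "covering_pairs j k l = {\<alpha> \<in> embeddings j l \<times> embeddings k l. joint_image j k \<alpha> = {1..l}}"

definition compose_pair :: "nat \<Rightarrow> nat \<Rightarrow> perm \<Rightarrow> perm \<times> perm \<Rightarrow> perm \<times> perm" where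
  "compose_pair j k e \<alpha> = (restrict (e \<circ> fst \<alpha>) {1..j}, restrict (e \<circ> snd \<alpha>) {1..k})"

definition enum_set :: "nat set \<Rightarrow> perm" where
  "enum_set U = (SOME f. bij_betw f {1..card U} U)"

lemma enum_set_bij: "finite U \<Longrightarrow> bij_betw (enum_set U) {1..card U} U"
  unfolding enum_set_def by (rule someI_ex[OF ex_bij_betw_nat_finite_1])

lemma inj_on_enum_set: "U \<subseteq> {1..N} \<Longrightarrow> inj_on (enum_set U) {1..card U}"
  using enum_set_bij finite_subset[of U "{1..N}"] by (auto simp: bij_betw_def)

lemma finite_covering_pairs: "finite (covering_pairs j k l)"
  unfolding covering_pairs_def by (rule finite_subset[of _ "embeddings j l \<times> embeddings k l"])
    (auto simp: finite_embeddings)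

lemma joint_image_subset: "\<alpha> \<in> embeddings j l \<times> embeddings k l \<Longrightarrow> joint_image j k \<alpha> \<subseteq> {1..l}"
  unfolding joint_image_def using embeddingsD(2) by (metis SigmaE Un_least fst_conv snd_conv)

lemma covering_pairs_empty:
  assumes "j + k < l"
  shows "covering_pairs j k l = {}"
proof -
  have False if "\<alpha> \<in> covering_pairs j k l" for \<alpha>
  proof -
    have "l = card (joint_image j k \<alpha>)" using that by (simp add: covering_pairs_def)
    also have "\<dots> \<le> card (fst \<alpha> ` {1..j}) + card (snd \<alpha> ` {1..k})"
      unfolding joint_image_def by (rule card_Un_le)
    also have "\<dots> \<le> j + k"
      using card_image_le[of "{1..j}" "fst \<alpha>"] card_image_le[of "{1..k}" "snd \<alpha>"] by simp
    finally show False using assms by simp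
  qed
  then show ?thesis by blast
qed

lemma joint_image_compose_pair: "joint_image j k (compose_pair j k e \<alpha>) = e ` joint_image j k \<alpha>"
  unfolding joint_image_def compose_pair_def by (simp add: image_Un image_comp)

lemma compose_pair_compose_pair:
  "compose_pair j k e' (compose_pair j k e \<alpha>) = compose_pair j k (e' \<circ> e) \<alpha>"
  unfolding compose_pair_def by (simp add: restrict_def fun_eq_iff)

lemma restrict_comp_embedding_id_on:
  assumes "f \<in> embeddings i l" "\<And>x. x \<in> f ` {1..i} \<Longrightarrow> e x = x"
  shows "restrict (e \<circ> f) {1..i} = f"
proof -
  have "restrict (e \<circ> f) {1..i} = restrict f {1..i}"
    by (rule restrict_ext) (simp add: assms(2))
  then show ?thesis using restrict_embedding[OF assms(1)] by simp
qed

lemma compose_pair_id_on: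
  assumes "\<alpha> \<in> embeddings j l \<times> embeddings k l" "\<And>x. x \<in> joint_image j k \<alpha> \<Longrightarrow> e x = x"
  shows "compose_pair j k e \<alpha> = \<alpha>"
  using assms restrict_comp_embedding_id_on[of "fst \<alpha>" j l e]
    restrict_comp_embedding_id_on[of "snd \<alpha>" k l e]
  unfolding compose_pair_def joint_image_def by auto

lemma compose_pair_mem:
  assumes "\<alpha> \<in> embeddings j l \<times> embeddings k l" "bij_betw e (joint_image j k \<alpha>) V" "V \<subseteq> {1..N}"
  shows "compose_pair j k e \<alpha> \<in> {\<iota> \<in> embeddings j N \<times> embeddings k N. joint_image j k \<iota> = V}"
proof -
  have emb: "restrict (e \<circ> f) {1..i} \<in> embeddings i N"
    if "f \<in> embeddings i l" "f ` {1..i} \<subseteq> joint_image j k \<alpha>" for f i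
  proof (rule restrict_in_embeddings)
    show "inj_on (e \<circ> f) {1..i}"
      using embeddingsD(1)[OF that(1)] inj_on_subset[OF bij_betw_imp_inj_on[OF assms(2)] that(2)]
      by (rule comp_inj_on)
    show "(e \<circ> f) ` {1..i} \<subseteq> {1..N}"
      using that(2) bij_betw_imp_surj_on[OF assms(2)] assms(3) by (auto simp: image_comp[symmetric])
  qed
  have "compose_pair j k e \<alpha> \<in> embeddings j N \<times> embeddings k N"
    using assms(1) emb[of "fst \<alpha>" j] emb[of "snd \<alpha>" k]
    unfolding compose_pair_def joint_image_def by auto
  moreover have "joint_image j k (compose_pair j k e \<alpha>) = V"
    using bij_betw_imp_surj_on[OF assms(2)] by (simp add: joint_image_compose_pair)
  ultimately show ?thesis by simp
qed

lemma bij_betw_compose_pair_enum_set: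
  assumes "U \<subseteq> {1..N}"
  shows "bij_betw (compose_pair j k (enum_set U)) (covering_pairs j k (card U))
           {\<iota> \<in> embeddings j N \<times> embeddings k N. joint_image j k \<iota> = U}"
proof -
  let ?l = "card U" and ?e = "enum_set U"
  let ?h = "inv_into {1..?l} ?e"
  have e: "bij_betw ?e {1..?l} U"
    using assms finite_subset by (intro enum_set_bij) blast
  have h: "bij_betw ?h U {1..?l}" using e by (rule bij_betw_inv_into)
  show ?thesis
  proof (rule bij_betwI[where g = "compose_pair j k ?h"])
    show "compose_pair j k ?e \<in> covering_pairs j k ?l
        \<rightarrow> {\<iota> \<in> embeddings j N \<times> embeddings k N. joint_image j k \<iota> = U}"
      using compose_pair_mem[OF _ _ assms] e by (auto simp: covering_pairs_def)
    show "compose_pair j k ?h \<in> {\<iota> \<in> embeddings j N \<times> embeddings k N. joint_image j k \<iota> = U}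
        \<rightarrow> covering_pairs j k ?l"
      using compose_pair_mem[OF _ _ order.refl] h unfolding covering_pairs_def by auto
    show "compose_pair j k ?h (compose_pair j k ?e \<alpha>) = \<alpha>" if "\<alpha> \<in> covering_pairs j k ?l" for \<alpha>
      unfolding compose_pair_compose_pair
      using that bij_betw_inv_into_left[OF e]
      by (intro compose_pair_id_on) (auto simp: covering_pairs_def)
    show "compose_pair j k ?e (compose_pair j k ?h \<iota>) = \<iota>"
      if "\<iota> \<in> {\<iota> \<in> embeddings j N \<times> embeddings k N. joint_image j k \<iota> = U}" for \<iota>
      unfolding compose_pair_compose_pair
      using that bij_betw_inv_into_right[OF e] by (intro compose_pair_id_on) auto
  qed
qed

lemma card_pairs_eq_sum_covering_pairs:
  "card {\<iota> \<in> embeddings j N \<times> embeddings k N. Q \<iota>} =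
   (\<Sum>U\<in>Pow {1..N}. card {\<alpha> \<in> covering_pairs j k (card U). Q (compose_pair j k (enum_set U) \<alpha>)})"
proof -
  let ?P = "{\<iota> \<in> embeddings j N \<times> embeddings k N. Q \<iota>}"
  have "joint_image j k \<iota> \<in> Pow {1..N}" if "\<iota> \<in> ?P" for \<iota>
    using joint_image_subset[of \<iota> j N k] that by simp
  then have "card ?P = (\<Sum>U\<in>Pow {1..N}. card {\<iota> \<in> ?P. joint_image j k \<iota> = U})"
    by (intro card_eq_sum_card_fibres) (auto simp: finite_embeddings)
  also have "\<dots> = (\<Sum>U\<in>Pow {1..N}.
      card {\<alpha> \<in> covering_pairs j k (card U). Q (compose_pair j k (enum_set U) \<alpha>)})"
  proof (rule sum.cong[OF refl])
    fix U assume "U \<in> Pow {1..N}"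
    then have "bij_betw (compose_pair j k (enum_set U))
        {\<alpha> \<in> covering_pairs j k (card U). Q (compose_pair j k (enum_set U) \<alpha>)}
        {\<iota> \<in> {\<iota> \<in> embeddings j N \<times> embeddings k N. joint_image j k \<iota> = U}. Q \<iota>}"
      by (intro bij_betw_Collect bij_betw_compose_pair_enum_set) blast
    moreover have "{\<iota> \<in> {\<iota> \<in> embeddings j N \<times> embeddings k N. joint_image j k \<iota> = U}. Q \<iota>}
        = {\<iota> \<in> ?P. joint_image j k \<iota> = U}" by blast
    ultimately show "card {\<iota> \<in> ?P. joint_image j k \<iota> = U}
        = card {\<alpha> \<in> covering_pairs j k (card U). Q (compose_pair j k (enum_set U) \<alpha>)}"
      by (simp add: bij_betw_same_card)
  qed
  finally show ?thesis .
qed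

lemma push_product_compose_pair:
  assumes "\<alpha> \<in> embeddings j l \<times> embeddings k l" "inj_on e {1..l}" "g \<in> Gr j" "g' \<in> Gr k"
  shows "push_product j k g g' (compose_pair j k e \<alpha>) = push l e (push_product j k g g' \<alpha>)"
  using assms
  by (auto simp: push_product_def compose_pair_def push_push push_gmul push_embedding_closed)

section \<open>The structure constants\<close>

lemma bij_betw_compose_pair_inv:
  assumes "t \<in> Sym l"
  shows "bij_betw (compose_pair j k (inv t)) (covering_pairs j k l) (covering_pairs j k l)"
proof -
  have b: "bij_betw (inv t) {1..l} {1..l}" "bij_betw t {1..l} {1..l}"
    using assms Sym_inv[OF assms] by (simp_all add: Sym_def permutes_imp_bij)
  have inv: "compose_pair j k s (compose_pair j k s' \<alpha>) = \<alpha>"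
    if "\<alpha> \<in> covering_pairs j k l" "s \<circ> s' = id" for s s' \<alpha>
    using that unfolding compose_pair_compose_pair
    by (intro compose_pair_id_on) (auto simp: covering_pairs_def)
  show ?thesis
  proof (rule bij_betwI[where g = "compose_pair j k t"])
    show "compose_pair j k (inv t) \<in> covering_pairs j k l \<rightarrow> covering_pairs j k l"
      "compose_pair j k t \<in> covering_pairs j k l \<rightarrow> covering_pairs j k l"
      using compose_pair_mem[OF _ _ order.refl] b unfolding covering_pairs_def by auto
    show "compose_pair j k t (compose_pair j k (inv t) \<alpha>) = \<alpha>"
      "compose_pair j k (inv t) (compose_pair j k t \<alpha>) = \<alpha>" if "\<alpha> \<in> covering_pairs j k l" for \<alpha>
      using inv[OF that] Sym_bij[OF assms]
      by (simp_all add: bij_is_inj bij_is_surj surj_iff[THEN iffD1])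
  qed
qed

lemma push_product_compose_pair_inv:
  assumes "t \<in> Sym l" "\<alpha> \<in> embeddings j l \<times> embeddings k l" "g \<in> Gr j" "g' \<in> Gr k"
  shows "push_product j k g g' (compose_pair j k (inv t) \<alpha>) = conjK t (push_product j k g g' \<alpha>)"
proof -
  have "inj_on (inv t) {1..l}"
    using Sym_inv[OF assms(1)] by (simp add: Sym_def permutes_inj_on)
  then show ?thesis
    using assms push_product_compose_pair conjK_eq_push[OF Sym_bij push_product_closed]
    by metis
qed

definition covering_count :: "nat \<Rightarrow> nat \<Rightarrow> nat \<Rightarrow> gel \<Rightarrow> gel \<Rightarrow> gel \<Rightarrow> nat" where
  "covering_count j k l g g' y = card {\<alpha> \<in> covering_pairs j k l. push_product j k g g' \<alpha> = y}"

lemma covering_count_conjK: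
  assumes "t \<in> Sym l" "g \<in> Gr j" "g' \<in> Gr k"
  shows "covering_count j k l g g' (conjK t y) = covering_count j k l g g' y"
proof -
  let ?X = "\<lambda>y. {\<alpha> \<in> covering_pairs j k l. push_product j k g g' \<alpha> = y}"
  have "push_product j k g g' (compose_pair j k (inv t) \<alpha>) = conjK t y \<longleftrightarrow> push_product j k g g' \<alpha> = y"
    if "\<alpha> \<in> covering_pairs j k l" for \<alpha>
    using that assms push_product_compose_pair_inv conjK_inv_conjK[OF Sym_bij[OF assms(1)]]
    unfolding covering_pairs_def by (metis (no_types, lifting) mem_Collect_eq)
  then have "{\<alpha> \<in> covering_pairs j k l.
      push_product j k g g' (compose_pair j k (inv t) \<alpha>) = conjK t y} = ?X y"
    by blast
  then have "bij_betw (compose_pair j k (inv t)) (?X y) (?X (conjK t y))"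
    using bij_betw_Collect[OF bij_betw_compose_pair_inv[OF assms(1), of j k],
        where Q = "\<lambda>\<alpha>. push_product j k g g' \<alpha> = conjK t y"] by simp
  then show ?thesis unfolding covering_count_def by (simp add: bij_betw_same_card)
qed

definition stabilizer :: "nat \<Rightarrow> gel \<Rightarrow> perm set" where
  "stabilizer l y = {t \<in> Sym l. conjK t y = y}"

lemma finite_stabilizer: "finite (stabilizer l y)"
  unfolding stabilizer_def using finite_Sym by simp

lemma id_in_stabilizer: "id \<in> stabilizer l y"
  unfolding stabilizer_def using id_in_Sym by auto

lemma stabilizer_compose:
  assumes "t \<in> stabilizer l y" "s \<in> stabilizer l y"
  shows "t \<circ> s \<in> stabilizer l y"
proof -
  have "t \<in> Sym l" "s \<in> Sym l" "conjK t y = y" "conjK s y = y"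
    using assms unfolding stabilizer_def by auto
  then show ?thesis
    unfolding stabilizer_def by (simp add: Sym_compose conjK_conjK[symmetric] Sym_bij)
qed

lemma stabilizer_inv:
  assumes "t \<in> stabilizer l y"
  shows "inv t \<in> stabilizer l y"
proof -
  have t: "t \<in> Sym l" "conjK t y = y"
    using assms unfolding stabilizer_def by auto
  then have "conjK (inv t) y = y"
    using conjK_inv_conjK[OF Sym_bij[OF t(1)], of y] by simp
  then show ?thesis unfolding stabilizer_def using Sym_inv[OF t(1)] by simp
qed

lemma inj_on_compose_pair_inv:
  assumes "\<alpha> \<in> covering_pairs j k l"
  shows "inj_on (\<lambda>t. compose_pair j k (inv t) \<alpha>) (Sym l)"
proof (rule inj_onI)
  fix t s assume t: "t \<in> Sym l" and s: "s \<in> Sym l"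
    and eq: "compose_pair j k (inv t) \<alpha> = compose_pair j k (inv s) \<alpha>"
  have e1: "restrict (inv t \<circ> fst \<alpha>) {1..j} = restrict (inv s \<circ> fst \<alpha>) {1..j}"
    and e2: "restrict (inv t \<circ> snd \<alpha>) {1..k} = restrict (inv s \<circ> snd \<alpha>) {1..k}"
    using eq unfolding compose_pair_def by simp_all
  have on_image: "inv t x = inv s x" if "x \<in> joint_image j k \<alpha>" for x
  proof -
    from that consider i where "i \<in> {1..j}" "x = fst \<alpha> i" | i where "i \<in> {1..k}" "x = snd \<alpha> i"
      unfolding joint_image_def by blast
    then show ?thesis
    proof cases
      case 1 then show ?thesis using fun_cong[OF e1, of i] by simp
    next
      case 2 then show ?thesis using fun_cong[OF e2, of i] by simp
    qed
  qed
  have "inv t = inv s"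
  proof
    fix x show "inv t x = inv s x"
    proof (cases "x \<in> {1..l}")
      case True then show ?thesis using on_image assms by (simp add: covering_pairs_def)
    next
      case False then show ?thesis
        using permutes_not_in[of "inv t" "{1..l}"] permutes_not_in[of "inv s" "{1..l}"]
          Sym_inv[OF t] Sym_inv[OF s] by (simp add: Sym_def)
    qed
  qed
  then show "t = s" using Sym_bij[OF t] Sym_bij[OF s] by (metis inv_inv_eq)
qed

definition stabilizer_orbit :: "nat \<Rightarrow> nat \<Rightarrow> nat \<Rightarrow> gel \<Rightarrow> perm \<times> perm \<Rightarrow> (perm \<times> perm) set" where
  "stabilizer_orbit j k l y \<alpha> = (\<lambda>t. compose_pair j k (inv t) \<alpha>) ` stabilizer l y"

lemma stabilizer_orbit_eq:
  assumes "\<beta> \<in> stabilizer_orbit j k l y \<alpha>"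
  shows "stabilizer_orbit j k l y \<beta> = stabilizer_orbit j k l y \<alpha>"
proof -
  obtain t where t: "t \<in> stabilizer l y" "\<beta> = compose_pair j k (inv t) \<alpha>"
    using assms unfolding stabilizer_orbit_def by blast
  have bij: "bij s" if "s \<in> stabilizer l y" for s
    using that Sym_bij unfolding stabilizer_def by blast
  have "compose_pair j k (inv s) \<beta> = compose_pair j k (inv (t \<circ> s)) \<alpha>" if "s \<in> stabilizer l y" for s
    using t(2) bij[OF that] bij[OF t(1)] by (simp add: compose_pair_compose_pair o_inv_distrib)
  then have "stabilizer_orbit j k l y \<beta> = (\<lambda>u. compose_pair j k (inv u) \<alpha>) ` ((\<circ>) t ` stabilizer l y)"
    unfolding stabilizer_orbit_def image_image by (rule image_cong[OF refl])
  also have "(\<circ>) t ` stabilizer l y = stabilizer l y"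
  proof (intro equalityI subsetI)
    fix s assume s: "s \<in> stabilizer l y"
    have "s = t \<circ> (inv t \<circ> s)"
      using bij[OF t(1)] by (simp add: o_assoc bij_is_surj surj_iff[THEN iffD1])
    then show "s \<in> (\<circ>) t ` stabilizer l y"
      using stabilizer_compose[OF stabilizer_inv[OF t(1)] s] by (rule image_eqI)
  next
    fix s assume "s \<in> (\<circ>) t ` stabilizer l y"
    then show "s \<in> stabilizer l y" using stabilizer_compose[OF t(1)] by blast
  qed
  finally show ?thesis unfolding stabilizer_orbit_def .
qed

lemma card_stabilizer_orbit:
  assumes "\<alpha> \<in> covering_pairs j k l"
  shows "card (stabilizer_orbit j k l y \<alpha>) = card (stabilizer l y)"
  unfolding stabilizer_orbit_def
  by (rule card_image, rule inj_on_subset[OF inj_on_compose_pair_inv[OF assms]])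
    (auto simp: stabilizer_def)

lemma mem_stabilizer_orbit_self:
  assumes "\<alpha> \<in> covering_pairs j k l"
  shows "\<alpha> \<in> stabilizer_orbit j k l y \<alpha>"
proof -
  have "compose_pair j k (inv id) \<alpha> = \<alpha>"
    using assms by (intro compose_pair_id_on) (auto simp: covering_pairs_def)
  then show ?thesis
    unfolding stabilizer_orbit_def using id_in_stabilizer by (metis image_eqI)
qed

lemma stabilizer_orbit_subset:
  assumes "g \<in> Gr j" "g' \<in> Gr k"
    and cov: "\<alpha> \<in> covering_pairs j k l" and prod: "push_product j k g g' \<alpha> = y"
  shows "stabilizer_orbit j k l y \<alpha> \<subseteq> {\<beta> \<in> covering_pairs j k l. push_product j k g g' \<beta> = y}"
proof
  fix \<beta> assume "\<beta> \<in> stabilizer_orbit j k l y \<alpha>"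
  then obtain t where t: "t \<in> Sym l" "conjK t y = y" "\<beta> = compose_pair j k (inv t) \<alpha>"
    unfolding stabilizer_orbit_def stabilizer_def by blast
  have "\<beta> \<in> covering_pairs j k l"
    using t(3) cov bij_betw_imp_funcset[OF bij_betw_compose_pair_inv[OF t(1)]] by blast
  moreover have "push_product j k g g' \<beta> = y"
    using push_product_compose_pair_inv[OF t(1) _ assms(1,2)] cov prod t(2,3)
    by (simp add: covering_pairs_def)
  ultimately show "\<beta> \<in> {\<beta> \<in> covering_pairs j k l. push_product j k g g' \<beta> = y}" by simp
qed

lemma card_stabilizer_dvd_covering_count:
  assumes "g \<in> Gr j" "g' \<in> Gr k"
  shows "card (stabilizer l y) dvd covering_count j k l g g' y"
proof -
  let ?X = "{\<alpha> \<in> covering_pairs j k l. push_product j k g g' \<alpha> = y}"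
  let ?orbits = "stabilizer_orbit j k l y ` ?X"
  have "stabilizer_orbit j k l y \<alpha> \<subseteq> ?X" "\<alpha> \<in> stabilizer_orbit j k l y \<alpha>" if "\<alpha> \<in> ?X" for \<alpha>
    using that stabilizer_orbit_subset[OF assms] mem_stabilizer_orbit_self by auto
  then have "\<Union>?orbits = ?X" by blast
  moreover have "card (stabilizer l y) dvd card (\<Union>?orbits)"
  proof (rule dvd_partition)
    have "\<Union>?orbits \<subseteq> covering_pairs j k l" using \<open>\<Union>?orbits = ?X\<close> by blast
    then show "finite (\<Union>?orbits)" using finite_covering_pairs by (rule finite_subset)
    show "\<forall>C\<in>?orbits. card (stabilizer l y) dvd card C"
      using card_stabilizer_orbit by auto
    show "\<forall>C1\<in>?orbits. \<forall>C2\<in>?orbits. C1 \<noteq> C2 \<longrightarrow> C1 \<inter> C2 = {}"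
      using stabilizer_orbit_eq by blast
  qed
  ultimately show ?thesis unfolding covering_count_def by simp
qed

definition classes_of :: "nat \<Rightarrow> cls set" where
  "classes_of l = {e \<in> classes. fst e = l}"

definition classes_upto :: "nat \<Rightarrow> cls set" where
  "classes_upto M = {e \<in> classes. fst e \<le> M}"

lemma finite_classes_of: "finite (classes_of l)"
proof -
  have "classes_of l \<subseteq> (\<lambda>g. (l, Korbit l g)) ` Gr l"
    unfolding classes_of_def classes_def by auto
  then show ?thesis by (rule finite_subset) (rule finite_imageI[OF finite_Gr])
qed

lemma finite_classes_upto: "finite (classes_upto M)"
proof -
  have "classes_upto M = (\<Union>l\<in>{..M}. classes_of l)"
    unfolding classes_upto_def classes_of_def by auto
  then show ?thesis using finite_classes_of by simp
qed

lemma card_conjugators_eq_card_stabilizer: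
  assumes "g \<in> Gr l" "t0 \<in> Sym l"
  shows "card {t \<in> Sym l. conjK t g = conjK t0 g} = card (stabilizer l g)"
proof -
  have b0: "bij t0" using Sym_bij[OF assms(2)] .
  have "(\<lambda>s. s \<circ> t0) ` stabilizer l g = {t \<in> Sym l. conjK t g = conjK t0 g}"
  proof (intro equalityI subsetI)
    fix t assume "t \<in> (\<lambda>s. s \<circ> t0) ` stabilizer l g"
    then obtain s where s: "s \<in> Sym l" "conjK s g = g" "t = s \<circ> t0"
      unfolding stabilizer_def by blast
    then show "t \<in> {t \<in> Sym l. conjK t g = conjK t0 g}"
      using conjK_conjK[OF Sym_bij[OF s(1)] b0, of g] Sym_compose[OF s(1) assms(2)] by simp
  next
    fix t assume t: "t \<in> {t \<in> Sym l. conjK t g = conjK t0 g}"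
    then have ts: "t \<in> Sym l" and tg: "conjK t g = conjK t0 g" by auto
    have "conjK (t \<circ> inv t0) g = conjK (inv t0) (conjK t0 g)"
      using conjK_conjK[OF Sym_bij[OF ts] bij_imp_bij_inv[OF b0], of g] tg by simp
    then have "t \<circ> inv t0 \<in> stabilizer l g"
      unfolding stabilizer_def using conjK_inv_conjK[OF b0] Sym_compose[OF ts Sym_inv[OF assms(2)]]
      by simp
    moreover have "t = (t \<circ> inv t0) \<circ> t0"
      using b0 by (simp add: o_assoc[symmetric] bij_is_inj)
    ultimately show "t \<in> (\<lambda>s. s \<circ> t0) ` stabilizer l g" by (rule rev_image_eqI[of "t \<circ> inv t0"])
  qed
  moreover have "inj_on (\<lambda>s. s \<circ> t0) (stabilizer l g)"
    using b0 by (intro inj_onI) (metis bij_is_surj o_assoc comp_id surj_iff)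
  ultimately show ?thesis by (metis card_image)
qed

lemma card_self_embeddings:
  assumes "g \<in> Gr l"
  shows "card {\<sigma> \<in> embeddings l l. push l \<sigma> g = y}
       = (if y \<in> Korbit l g then card (stabilizer l g) else 0)"
proof -
  have "card {\<sigma> \<in> embeddings l l. push l \<sigma> g = y} = card {t \<in> Sym l. conjK t g = y}"
    using card_conjugators[OF order.refl assms] by simp
  also have "\<dots> = (if y \<in> Korbit l g then card (stabilizer l g) else 0)"
  proof (cases "y \<in> Korbit l g")
    case True
    then obtain t0 where "t0 \<in> Sym l" "y = conjK t0 g" unfolding Korbit_def by blast
    then show ?thesis using True card_conjugators_eq_card_stabilizer[OF assms] by simp
  next
    case False
    then have "{t \<in> Sym l. conjK t g = y} = {}" unfolding Korbit_def by blast
    then show ?thesis using False by (simp only: card.empty if_False)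
  qed
  finally show ?thesis .
qed

(* The division is exact by card_stabilizer_dvd_covering_count. *)
definition struct_const :: "cls \<Rightarrow> cls \<Rightarrow> cls \<Rightarrow> nat" where
  "struct_const c d e = (if c \<in> classes \<and> d \<in> classes \<and> e \<in> classes
     then covering_count (fst c) (fst d) (fst e) (rep c) (rep d) (rep e)
          div card (stabilizer (fst e) (rep e))
     else 0)"

lemma struct_const_nonzeroD:
  assumes "struct_const c d e \<noteq> 0"
  shows "c \<in> classes" "d \<in> classes" "e \<in> classes" "fst e \<le> fst c + fst d"
proof -
  show "c \<in> classes" "d \<in> classes" "e \<in> classes"
    using assms unfolding struct_const_def by (auto split: if_splits)
  show "fst e \<le> fst c + fst d"
  proof (rule ccontr)
    assume "\<not> fst e \<le> fst c + fst d"
    then have "covering_pairs (fst c) (fst d) (fst e) = {}" by (intro covering_pairs_empty) simp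
    then have "covering_count (fst c) (fst d) (fst e) (rep c) (rep d) (rep e) = 0"
      unfolding covering_count_def by simp
    then show False using assms unfolding struct_const_def by (simp split: if_splits)
  qed
qed

lemma supp_struct_const_subset:
  assumes "fst c + fst d \<le> M"
  shows "supp (struct_const c d) \<subseteq> classes_upto M"
proof
  fix e assume "e \<in> supp (struct_const c d)"
  then have "e \<in> classes" "fst e \<le> fst c + fst d"
    using struct_const_nonzeroD[of c d e] by (simp_all add: supp_def)
  then show "e \<in> classes_upto M" using assms by (simp add: classes_upto_def)
qed

lemma finite_supp_struct_const: "finite (supp (struct_const c d))"
  using supp_struct_const_subset[OF order.refl] finite_classes_upto by (rule finite_subset)

lemma supp_struct_const_eq: "supp (struct_const c d) = {e \<in> classes. struct_const c d e \<noteq> 0}"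
  unfolding supp_def using struct_const_nonzeroD(3) by blast

lemma supp_struct_const_subset_classes: "supp (struct_const c d) \<subseteq> classes"
  unfolding supp_struct_const_eq by blast

lemma card_self_embeddings_rep:
  assumes e: "e \<in> classes" and y: "y \<in> Gr (fst e)"
  shows "card {\<sigma> \<in> embeddings (fst e) (fst e). push (fst e) \<sigma> (rep e) = y}
       = (if e = (fst e, Korbit (fst e) y) then card (stabilizer (fst e) (rep e)) else 0)"
proof -
  have "y \<in> Korbit (fst e) (rep e) \<longleftrightarrow> e = (fst e, Korbit (fst e) y)"
    using class_eq_Korbit_rep[OF e] Korbit_eq mem_Korbit_self by (metis prod.inject)
  then show ?thesis using card_self_embeddings[OF rep_in_Gr[OF e]] by simp
qed

lemma sum_struct_const_card_self_embeddings:
  assumes c: "c \<in> classes" and d: "d \<in> classes" and y: "y \<in> Gr l"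
  shows "(\<Sum>e\<in>classes_of l. struct_const c d e * card {\<sigma> \<in> embeddings l l. push l \<sigma> (rep e) = y})
       = covering_count (fst c) (fst d) l (rep c) (rep d) y"
proof -
  let ?e = "(l, Korbit l y)" and ?cnt = "covering_count (fst c) (fst d) l (rep c) (rep d)"
  have e_cls: "?e \<in> classes" using y unfolding classes_def by blast
  then have e: "?e \<in> classes_of l" by (simp add: classes_of_def)
  have g: "rep ?e \<in> Gr l" using rep_in_Gr[of ?e] e by (simp add: classes_of_def)
  obtain t0 where t0: "t0 \<in> Sym l" "y = conjK t0 (rep ?e)"
    using class_eq_Korbit_rep[of ?e] e mem_Korbit_self[of y l]
    unfolding classes_of_def Korbit_def by auto
  have "(\<Sum>e'\<in>classes_of l. struct_const c d e' * card {\<sigma> \<in> embeddings l l. push l \<sigma> (rep e') = y})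
      = (\<Sum>e'\<in>classes_of l. if e' = ?e then struct_const c d e' * card (stabilizer l (rep e')) else 0)"
  proof (rule sum.cong[OF refl])
    fix e' assume "e' \<in> classes_of l"
    then have "e' \<in> classes" "fst e' = l" by (simp_all add: classes_of_def)
    then show "struct_const c d e' * card {\<sigma> \<in> embeddings l l. push l \<sigma> (rep e') = y}
        = (if e' = ?e then struct_const c d e' * card (stabilizer l (rep e')) else 0)"
      using card_self_embeddings_rep[of e' y] y by simp
  qed
  also have "\<dots> = struct_const c d ?e * card (stabilizer l (rep ?e))"
    using e by (simp add: sum.delta[OF finite_classes_of])
  also have "\<dots> = ?cnt (rep ?e) div card (stabilizer l (rep ?e)) * card (stabilizer l (rep ?e))"
    using c d e_cls by (simp add: struct_const_def)
  also have "\<dots> = ?cnt (rep ?e)"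
    using card_stabilizer_dvd_covering_count rep_in_Gr c d by simp
  also have "\<dots> = ?cnt y"
    using covering_count_conjK[OF t0(1) rep_in_Gr[OF c] rep_in_Gr[OF d], of "rep ?e"]
    by (simp only: t0(2)[symmetric])
  finally show ?thesis .
qed

lemma card_covering_pairs_eq_sum_struct_const:
  assumes c: "c \<in> classes" and d: "d \<in> classes"
  shows "card {\<alpha> \<in> covering_pairs (fst c) (fst d) l.
                H (push_product (fst c) (fst d) (rep c) (rep d) \<alpha>) = x}
       = (\<Sum>e\<in>classes_of l. struct_const c d e * card {\<sigma> \<in> embeddings l l. H (push l \<sigma> (rep e)) = x})"
proof -
  let ?j = "fst c" and ?k = "fst d" and ?g = "rep c" and ?g' = "rep d"
  let ?Y = "{y \<in> Gr l. H y = x}"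
  have g: "?g \<in> Gr ?j" "?g' \<in> Gr ?k" using rep_in_Gr c d by auto
  have "card {\<alpha> \<in> covering_pairs ?j ?k l. H (push_product ?j ?k ?g ?g' \<alpha>) = x}
      = (\<Sum>y\<in>?Y. covering_count ?j ?k l ?g ?g' y)"
    unfolding covering_count_def using push_product_closed[OF _ g]
    by (intro card_Collect_eq_sum_card_fibres finite_covering_pairs finite_Gr)
      (auto simp: covering_pairs_def)
  also have "\<dots> = (\<Sum>y\<in>?Y. \<Sum>e\<in>classes_of l.
      struct_const c d e * card {\<sigma> \<in> embeddings l l. push l \<sigma> (rep e) = y})"
    using sum_struct_const_card_self_embeddings[OF c d] by simp
  also have "\<dots> = (\<Sum>e\<in>classes_of l.
      struct_const c d e * (\<Sum>y\<in>?Y. card {\<sigma> \<in> embeddings l l. push l \<sigma> (rep e) = y}))"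
    by (simp add: sum.swap[of _ ?Y] sum_distrib_left)
  also have "\<dots> = (\<Sum>e\<in>classes_of l.
      struct_const c d e * card {\<sigma> \<in> embeddings l l. H (push l \<sigma> (rep e)) = x})"
  proof (rule sum.cong[OF refl])
    fix e assume "e \<in> classes_of l"
    then have "rep e \<in> Gr l" using rep_in_Gr[of e] by (simp add: classes_of_def)
    then have "(\<lambda>\<sigma>. push l \<sigma> (rep e)) ` embeddings l l \<subseteq> Gr l"
      using push_embedding_closed by blast
    then have "card {\<sigma> \<in> embeddings l l. H (push l \<sigma> (rep e)) = x}
        = (\<Sum>y\<in>?Y. card {\<sigma> \<in> embeddings l l. push l \<sigma> (rep e) = y})"
      by (rule card_Collect_eq_sum_card_fibres[OF finite_embeddings finite_Gr])
    then show "struct_const c d e * (\<Sum>y\<in>?Y. card {\<sigma> \<in> embeddings l l. push l \<sigma> (rep e) = y})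
        = struct_const c d e * card {\<sigma> \<in> embeddings l l. H (push l \<sigma> (rep e)) = x}"
      by simp
  qed
  finally show ?thesis .
qed

lemma card_covering_pairs_eq_sum_classes_upto:
  assumes c: "c \<in> classes" and d: "d \<in> classes" and M: "fst c + fst d \<le> M"
  shows "card {\<alpha> \<in> covering_pairs (fst c) (fst d) l.
                H (push_product (fst c) (fst d) (rep c) (rep d) \<alpha>) = x}
       = (\<Sum>e\<in>classes_upto M. struct_const c d e *
            (if fst e = l then card {\<sigma> \<in> embeddings l l. H (push l \<sigma> (rep e)) = x} else 0))"
proof (cases "l \<le> M")
  case True
  have "{e \<in> classes_upto M. fst e = l} = classes_of l"
    using True unfolding classes_upto_def classes_of_def by auto
  then show ?thesis
    using card_covering_pairs_eq_sum_struct_const[OF c d]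
    by (simp add: if_distrib[of "(*) _"] sum.If_cases[OF finite_classes_upto] Int_def)
next
  case False
  then have "covering_pairs (fst c) (fst d) l = {}" using M by (intro covering_pairs_empty) simp
  moreover have "fst e \<noteq> l" if "e \<in> classes_upto M" for e
    using that False by (auto simp: classes_upto_def)
  ultimately show ?thesis by simp
qed

lemma card_covering_pairs_zero:
  "card {\<alpha> \<in> covering_pairs l 0 m. R (fst \<alpha>)} = (if m = l then card {\<sigma> \<in> embeddings l l. R \<sigma>} else 0)"
proof (cases "m = l")
  case True
  have "{\<alpha> \<in> covering_pairs l 0 m. R (fst \<alpha>)} = {\<sigma> \<in> embeddings l l. R \<sigma>} \<times> embeddings 0 l"
  proof
    show "{\<alpha> \<in> covering_pairs l 0 m. R (fst \<alpha>)} \<subseteq> {\<sigma> \<in> embeddings l l. R \<sigma>} \<times> embeddings 0 l"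
      unfolding covering_pairs_def True by auto
    show "{\<sigma> \<in> embeddings l l. R \<sigma>} \<times> embeddings 0 l \<subseteq> {\<alpha> \<in> covering_pairs l 0 m. R (fst \<alpha>)}"
    proof
      fix \<alpha> assume "\<alpha> \<in> {\<sigma> \<in> embeddings l l. R \<sigma>} \<times> embeddings 0 l"
      then have a: "fst \<alpha> \<in> embeddings l l" "R (fst \<alpha>)" "snd \<alpha> \<in> embeddings 0 l" by auto
      have "joint_image l 0 \<alpha> = {1..l}"
        unfolding joint_image_def using image_self_embedding[OF a(1)] by simp
      then show "\<alpha> \<in> {\<alpha> \<in> covering_pairs l 0 m. R (fst \<alpha>)}"
        unfolding covering_pairs_def True using a by (simp add: mem_Times_iff)
    qed
  qed
  then show ?thesis using True by (simp add: card_cartesian_product embeddings_0)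
next
  case False
  have "card {1..m} = card {1..l}" if "\<alpha> \<in> covering_pairs l 0 m" for \<alpha>
  proof -
    have "{1..m} = fst \<alpha> ` {1..l}" "inj_on (fst \<alpha>) {1..l}"
      using that embeddingsD(1) by (auto simp: covering_pairs_def joint_image_def)
    then show ?thesis by (simp add: card_image)
  qed
  then have "covering_pairs l 0 m = {}" using False by fastforce
  then show ?thesis using False by simp
qed

lemma AN_eq_sum_subsets:
  assumes e: "e \<in> classes"
  shows "AN N e x = of_nat (\<Sum>U\<in>Pow {1..N}. if fst e = card U
     then card {\<sigma> \<in> embeddings (card U) (card U).
                push (card U) (enum_set U) (push (card U) \<sigma> (rep e)) = x}
     else 0)"
proof -
  let ?l = "fst e" and ?g = "rep e"
  let ?Q = "\<lambda>\<iota>. push ?l (fst \<iota>) ?g = x"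
  have g: "?g \<in> Gr ?l" using rep_in_Gr[OF e] .
  \<comment> \<open>an embedding is a pair whose second component lies in the one-point set \<open>embeddings 0 N\<close>\<close>
  have "card {\<kappa> \<in> embeddings ?l N. push ?l \<kappa> ?g = x}
      = card ({\<kappa> \<in> embeddings ?l N. push ?l \<kappa> ?g = x} \<times> embeddings 0 N)"
    by (simp add: card_cartesian_product embeddings_0)
  also have "{\<kappa> \<in> embeddings ?l N. push ?l \<kappa> ?g = x} \<times> embeddings 0 N
      = {\<iota> \<in> embeddings ?l N \<times> embeddings 0 N. ?Q \<iota>}"
    by auto
  also have "card \<dots> = (\<Sum>U\<in>Pow {1..N}.
      card {\<alpha> \<in> covering_pairs ?l 0 (card U). ?Q (compose_pair ?l 0 (enum_set U) \<alpha>)})"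
    by (rule card_pairs_eq_sum_covering_pairs)
  also have "\<dots> = (\<Sum>U\<in>Pow {1..N}. if ?l = card U
      then card {\<sigma> \<in> embeddings (card U) (card U).
                 push (card U) (enum_set U) (push (card U) \<sigma> ?g) = x}
      else 0)"
  proof (rule sum.cong[OF refl])
    fix U assume "U \<in> Pow {1..N}"
    then have inj: "inj_on (enum_set U) {1..card U}" using inj_on_enum_set[of U N] by simp
    let ?R = "\<lambda>\<sigma>. push (card U) (enum_set U) (push ?l \<sigma> ?g) = x"
    have "?Q (compose_pair ?l 0 (enum_set U) \<alpha>) \<longleftrightarrow> ?R (fst \<alpha>)"
      if "\<alpha> \<in> covering_pairs ?l 0 (card U)" for \<alpha>
    proof -
      have "fst \<alpha> \<in> embeddings ?l (card U)" using that by (auto simp: covering_pairs_def)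
      then show ?thesis using push_push[OF _ inj g] by (simp add: compose_pair_def)
    qed
    then have "card {\<alpha> \<in> covering_pairs ?l 0 (card U). ?Q (compose_pair ?l 0 (enum_set U) \<alpha>)}
        = card {\<alpha> \<in> covering_pairs ?l 0 (card U). ?R (fst \<alpha>)}"
      by (intro arg_cong[where f = card]) auto
    then show "card {\<alpha> \<in> covering_pairs ?l 0 (card U). ?Q (compose_pair ?l 0 (enum_set U) \<alpha>)}
        = (if ?l = card U then card {\<sigma> \<in> embeddings (card U) (card U).
             push (card U) (enum_set U) (push (card U) \<sigma> ?g) = x} else 0)"
      using card_covering_pairs_zero[of ?l "card U" ?R] by auto
  qed
  finally show ?thesis by (simp add: AN_eq_card_embeddings[OF e])
qed

lemma conv_AN_eq_sum_struct_const:
  assumes c: "c \<in> classes" and d: "d \<in> classes" and M: "fst c + fst d \<le> M"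
  shows "conv N (AN N c) (AN N d) x = (\<Sum>e\<in>classes_upto M. of_nat (struct_const c d e) * AN N e x)"
proof -
  let ?j = "fst c" and ?k = "fst d" and ?g = "rep c" and ?g' = "rep d"
  let ?C = "classes_upto M"
  let ?W = "\<lambda>e U. if fst e = card U then card {\<sigma> \<in> embeddings (card U) (card U).
      push (card U) (enum_set U) (push (card U) \<sigma> (rep e)) = x} else 0"
  have g: "?g \<in> Gr ?j" "?g' \<in> Gr ?k" using rep_in_Gr c d by auto
  have "card {\<iota> \<in> embeddings ?j N \<times> embeddings ?k N. push_product ?j ?k ?g ?g' \<iota> = x}
      = (\<Sum>U\<in>Pow {1..N}. card {\<alpha> \<in> covering_pairs ?j ?k (card U).
           push_product ?j ?k ?g ?g' (compose_pair ?j ?k (enum_set U) \<alpha>) = x})"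
    by (rule card_pairs_eq_sum_covering_pairs)
  also have "\<dots> = (\<Sum>U\<in>Pow {1..N}. card {\<alpha> \<in> covering_pairs ?j ?k (card U).
           push (card U) (enum_set U) (push_product ?j ?k ?g ?g' \<alpha>) = x})"
  proof (rule sum.cong[OF refl])
    fix U assume "U \<in> Pow {1..N}"
    then have "inj_on (enum_set U) {1..card U}" using inj_on_enum_set[of U N] by simp
    then show "card {\<alpha> \<in> covering_pairs ?j ?k (card U).
           push_product ?j ?k ?g ?g' (compose_pair ?j ?k (enum_set U) \<alpha>) = x}
        = card {\<alpha> \<in> covering_pairs ?j ?k (card U).
           push (card U) (enum_set U) (push_product ?j ?k ?g ?g' \<alpha>) = x}"
      using push_product_compose_pair[OF _ _ g] unfolding covering_pairs_def
      by (intro arg_cong[where f = card]) auto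
  qed
  also have "\<dots> = (\<Sum>U\<in>Pow {1..N}. \<Sum>e\<in>?C. struct_const c d e * ?W e U)"
    by (rule sum.cong[OF refl], rule card_covering_pairs_eq_sum_classes_upto[OF c d M])
  also have "\<dots> = (\<Sum>e\<in>?C. struct_const c d e * (\<Sum>U\<in>Pow {1..N}. ?W e U))"
    unfolding sum_distrib_left by (rule sum.swap)
  finally show ?thesis
    using conv_AN_eq_card_pairs[OF c d] AN_eq_sum_subsets classes_upto_def by simp
qed

lemma sum_classes_upto_eq_sum_supp:
  assumes "fst c + fst d \<le> M" "\<And>e. struct_const c d e = 0 \<Longrightarrow> F e = 0"
  shows "(\<Sum>e\<in>classes_upto M. F e) = (\<Sum>e\<in>supp (struct_const c d). F e)"
proof (rule sum.mono_neutral_right[OF finite_classes_upto supp_struct_const_subset[OF assms(1)]])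
  show "\<forall>e\<in>classes_upto M - supp (struct_const c d). F e = 0"
    using assms(2) by (simp add: supp_def)
qed

lemma conv_AN_eq_sum_supp:
  assumes "c \<in> classes" "d \<in> classes"
  shows "conv N (AN N c) (AN N d)
       = (\<lambda>x. \<Sum>e\<in>supp (struct_const c d). of_nat (struct_const c d e) * AN N e x)"
proof
  fix x
  show "conv N (AN N c) (AN N d) x
      = (\<Sum>e\<in>supp (struct_const c d). of_nat (struct_const c d e) * AN N e x)"
    unfolding conv_AN_eq_sum_struct_const[OF assms order.refl]
    by (rule sum_classes_upto_eq_sum_supp) simp_all
qed

section \<open>Associativity\<close>

lemma conv_assoc: "conv N (conv N f h) k = conv N f (conv N h k)"
proof
  fix x
  show "conv N (conv N f h) k x = conv N f (conv N h k) x"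
  proof (cases "x \<in> Gr N")
    case False then show ?thesis unfolding conv_def by simp
  next
    case x: True
    have "conv N (conv N f h) k x = (\<Sum>y\<in>Gr N. \<Sum>z\<in>Gr N. f z * h (gmul (ginv z) y) * k (gmul (ginv y) x))"
      using x by (simp add: conv_def sum_distrib_right)
    also have "\<dots> = (\<Sum>z\<in>Gr N. \<Sum>y\<in>Gr N. f z * h (gmul (ginv z) y) * k (gmul (ginv y) x))"
      by (rule sum.swap)
    also have "\<dots> = (\<Sum>z\<in>Gr N. f z * (\<Sum>w\<in>Gr N. h w * k (gmul (ginv w) (gmul (ginv z) x))))"
    proof (rule sum.cong[OF refl])
      fix z assume z: "z \<in> Gr N"
      have "(\<Sum>y\<in>Gr N. f z * h (gmul (ginv z) y) * k (gmul (ginv y) x))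
          = (\<Sum>w\<in>Gr N. f z * h (gmul (ginv z) (gmul z w)) * k (gmul (ginv (gmul z w)) x))"
        by (rule sum.reindex_bij_betw[symmetric, OF bij_betw_gmul_left[OF z]])
      also have "\<dots> = (\<Sum>w\<in>Gr N. f z * (h w * k (gmul (ginv w) (gmul (ginv z) x))))"
        using z by (intro sum.cong refl) (simp add: ginv_gmul_cancel ginv_gmul gmul_assoc)
      finally show "(\<Sum>y\<in>Gr N. f z * h (gmul (ginv z) y) * k (gmul (ginv y) x))
          = f z * (\<Sum>w\<in>Gr N. h w * k (gmul (ginv w) (gmul (ginv z) x)))"
        by (simp add: sum_distrib_left)
    qed
    also have "\<dots> = conv N f (conv N h k) x"
      using x by (simp add: conv_def gmul_closed ginv_closed)
    finally show ?thesis .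
  qed
qed

lemma conv_sum_left: "conv N (\<lambda>x. \<Sum>i\<in>I. a i * F i x) h = (\<lambda>x. \<Sum>i\<in>I. a i * conv N (F i) h x)"
proof
  fix x
  have "(\<Sum>y\<in>Gr N. (\<Sum>i\<in>I. a i * F i y) * h (gmul (ginv y) x))
      = (\<Sum>i\<in>I. a i * (\<Sum>y\<in>Gr N. F i y * h (gmul (ginv y) x)))"
    by (simp add: sum_distrib_left sum_distrib_right mult.assoc sum.swap[of _ I])
  then show "conv N (\<lambda>x. \<Sum>i\<in>I. a i * F i x) h x = (\<Sum>i\<in>I. a i * conv N (F i) h x)"
    by (simp add: conv_def)
qed

lemma conv_sum_right: "conv N f (\<lambda>x. \<Sum>i\<in>I. a i * F i x) = (\<lambda>x. \<Sum>i\<in>I. a i * conv N f (F i) x)"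
proof
  fix x
  have "(\<Sum>y\<in>Gr N. f y * (\<Sum>i\<in>I. a i * F i (gmul (ginv y) x)))
      = (\<Sum>i\<in>I. a i * (\<Sum>y\<in>Gr N. f y * F i (gmul (ginv y) x)))"
    by (simp add: sum_distrib_left mult.left_commute sum.swap[of _ I])
  then show "conv N f (\<lambda>x. \<Sum>i\<in>I. a i * F i x) x = (\<Sum>i\<in>I. a i * conv N f (F i) x)"
    by (simp add: conv_def)
qed

lemma AN_rep_nonzero_iff:
  assumes e: "e \<in> classes" and e0: "e0 \<in> classes" and l: "fst e = fst e0"
  shows "AN (fst e0) e (rep e0) \<noteq> 0 \<longleftrightarrow> e = e0"
proof -
  have "card (stabilizer (fst e) (rep e)) \<noteq> 0"
    using finite_stabilizer id_in_stabilizer by (metis card_0_eq empty_iff)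
  moreover have "e = (fst e, Korbit (fst e) (rep e0)) \<longleftrightarrow> e = e0"
    using class_eq_Korbit_rep[OF e0] l by metis
  ultimately show ?thesis
    using card_self_embeddings_rep[OF e, of "rep e0"] rep_in_Gr[OF e0] l
    by (auto simp: AN_eq_card_embeddings[OF e])
qed

lemma AN_linear_independent:
  assumes fin: "finite E" and sub: "E \<subseteq> classes"
    and zero: "\<And>N x. (\<Sum>e\<in>E. coef e * AN N e x) = 0"
  shows "\<forall>e\<in>E. coef e = 0"
proof -
  have "\<forall>e\<in>E. fst e = l \<longrightarrow> coef e = 0" for l
  proof (induction l rule: less_induct)
    case (less l)
    show ?case
    proof (intro ballI impI)
      fix e0 assume e0E: "e0 \<in> E" and l0: "fst e0 = l"
      have e0: "e0 \<in> classes" using e0E sub by blast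
      have "coef e * AN l e (rep e0) = 0" if "e \<in> E - {e0}" for e
      proof -
        have e: "e \<in> classes" using that sub by blast
        consider "fst e < l" | "fst e = l" | "l < fst e" by linarith
        then show ?thesis
        proof cases
          case 1 then have "coef e = 0" using less.IH that by blast
          then show ?thesis by simp
        next
          case 2 then have "AN l e (rep e0) = 0" using AN_rep_nonzero_iff[OF e e0] that l0 by simp
          then show ?thesis by simp
        next
          case 3 then show ?thesis by (simp add: AN_def)
        qed
      qed
      then have "(\<Sum>e\<in>E. coef e * AN l e (rep e0)) = (\<Sum>e\<in>{e0}. coef e * AN l e (rep e0))"
        using e0E by (intro sum.mono_neutral_right[OF fin]) auto
      moreover have "AN l e0 (rep e0) \<noteq> 0" using AN_rep_nonzero_iff[OF e0 e0] l0 by simp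
      ultimately show "coef e0 = 0" using zero[of l "rep e0"] by simp
    qed
  qed
  then show ?thesis by blast
qed

lemma conv_conv_AN_left:
  assumes c: "c \<in> classes" and d: "d \<in> classes" and f: "f \<in> classes"
    and M: "fst c + fst d + fst f \<le> M"
  shows "conv N (conv N (AN N c) (AN N d)) (AN N f) x = (\<Sum>e\<in>classes_upto M.
      of_nat (\<Sum>e'\<in>supp (struct_const c d). struct_const c d e' * struct_const e' f e) * AN N e x)"
proof -
  let ?S = "supp (struct_const c d)"
  have "conv N (conv N (AN N c) (AN N d)) (AN N f) x
      = (\<Sum>e'\<in>?S. of_nat (struct_const c d e') * conv N (AN N e') (AN N f) x)"
    by (simp add: conv_AN_eq_sum_supp[OF c d] conv_sum_left)
  also have "\<dots> = (\<Sum>e'\<in>?S. of_nat (struct_const c d e') *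
      (\<Sum>e\<in>classes_upto M. of_nat (struct_const e' f e) * AN N e x))"
  proof (rule sum.cong[OF refl])
    fix e' assume "e' \<in> ?S"
    then have "e' \<in> classes" "fst e' + fst f \<le> M"
      using struct_const_nonzeroD[of c d e'] M by (auto simp: supp_def)
    then show "of_nat (struct_const c d e') * conv N (AN N e') (AN N f) x
        = of_nat (struct_const c d e') * (\<Sum>e\<in>classes_upto M. of_nat (struct_const e' f e) * AN N e x)"
      using conv_AN_eq_sum_struct_const[OF _ f] by simp
  qed
  also have "\<dots> = (\<Sum>e\<in>classes_upto M.
      of_nat (\<Sum>e'\<in>?S. struct_const c d e' * struct_const e' f e) * AN N e x)"
    by (simp add: sum_distrib_left sum_distrib_right mult.assoc sum.swap[of _ ?S])
  finally show ?thesis .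
qed

lemma conv_conv_AN_right:
  assumes c: "c \<in> classes" and d: "d \<in> classes" and f: "f \<in> classes"
    and M: "fst c + fst d + fst f \<le> M"
  shows "conv N (AN N c) (conv N (AN N d) (AN N f)) x = (\<Sum>e\<in>classes_upto M.
      of_nat (\<Sum>d'\<in>supp (struct_const d f). struct_const d f d' * struct_const c d' e) * AN N e x)"
proof -
  let ?S = "supp (struct_const d f)"
  have "conv N (AN N c) (conv N (AN N d) (AN N f)) x
      = (\<Sum>d'\<in>?S. of_nat (struct_const d f d') * conv N (AN N c) (AN N d') x)"
    by (simp add: conv_AN_eq_sum_supp[OF d f] conv_sum_right)
  also have "\<dots> = (\<Sum>d'\<in>?S. of_nat (struct_const d f d') *
      (\<Sum>e\<in>classes_upto M. of_nat (struct_const c d' e) * AN N e x))"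
  proof (rule sum.cong[OF refl])
    fix d' assume "d' \<in> ?S"
    then have "d' \<in> classes" "fst c + fst d' \<le> M"
      using struct_const_nonzeroD[of d f d'] M by (auto simp: supp_def)
    then show "of_nat (struct_const d f d') * conv N (AN N c) (AN N d') x
        = of_nat (struct_const d f d') * (\<Sum>e\<in>classes_upto M. of_nat (struct_const c d' e) * AN N e x)"
      using conv_AN_eq_sum_struct_const[OF c] by simp
  qed
  also have "\<dots> = (\<Sum>e\<in>classes_upto M.
      of_nat (\<Sum>d'\<in>?S. struct_const d f d' * struct_const c d' e) * AN N e x)"
    by (simp add: sum_distrib_left sum_distrib_right mult.assoc sum.swap[of _ ?S])
  finally show ?thesis .
qed

lemma struct_const_assoc:
  assumes c: "c \<in> classes" and d: "d \<in> classes" and f: "f \<in> classes"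
  shows "(\<Sum>e'\<in>supp (struct_const c d). struct_const c d e' * struct_const e' f e)
       = (\<Sum>d'\<in>supp (struct_const d f). struct_const d f d' * struct_const c d' e)"
    (is "?L e = ?R e")
proof (cases "e \<in> classes_upto (fst c + fst d + fst f)")
  case True
  let ?C = "classes_upto (fst c + fst d + fst f)"
  have "(\<Sum>e\<in>?C. (of_nat (?L e) - of_nat (?R e)) * AN N e x) = (0::complex)" for N x
    using conv_conv_AN_left[OF c d f order.refl, of N x] conv_conv_AN_right[OF c d f order.refl, of N x]
    by (simp add: left_diff_distrib sum_subtractf conv_assoc)
  then have "\<forall>e\<in>?C. (of_nat (?L e) - of_nat (?R e) :: complex) = 0"
    by (intro AN_linear_independent finite_classes_upto) (auto simp: classes_upto_def)
  then have "(of_nat (?L e) - of_nat (?R e) :: complex) = 0" using True by blast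
  then have "(of_nat (?L e) :: complex) = of_nat (?R e)" by (simp only: right_minus_eq)
  then show ?thesis by (simp only: of_nat_eq_iff)
next
  case False
  have "struct_const e' f e = 0" if "e' \<in> supp (struct_const c d)" for e'
  proof (rule ccontr)
    assume "struct_const e' f e \<noteq> 0"
    then have "e \<in> classes" "fst e \<le> fst e' + fst f" using struct_const_nonzeroD[of e' f e] by blast+
    moreover have "fst e' \<le> fst c + fst d" using that struct_const_nonzeroD(4) by (simp add: supp_def)
    ultimately show False using False by (simp add: classes_upto_def)
  qed
  moreover have "struct_const c d' e = 0" if "d' \<in> supp (struct_const d f)" for d'
  proof (rule ccontr)
    assume "struct_const c d' e \<noteq> 0"
    then have "e \<in> classes" "fst e \<le> fst c + fst d'" using struct_const_nonzeroD[of c d' e] by blast+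
    moreover have "fst d' \<le> fst d + fst f" using that struct_const_nonzeroD(4) by (simp add: supp_def)
    ultimately show False using False by (simp add: classes_upto_def)
  qed
  ultimately show ?thesis by simp
qed

section \<open>The algebra B\<close>

lemma Bspace_iff: "u \<in> Bspace \<longleftrightarrow> supp u \<subseteq> classes \<and> finite (supp u)"
  unfolding Bspace_def supp_def by blast

lemma Bmul_apply:
  "e \<in> classes \<Longrightarrow> Bmul a u v e = (\<Sum>c\<in>supp u. \<Sum>d\<in>supp v. u c * v d * of_nat (a c d e))"
  unfolding Bmul_def supp_def by simp

lemma supp_Bmul_subset: "supp (Bmul a u v) \<subseteq> (\<Union>c\<in>supp u. \<Union>d\<in>supp v. supp (a c d))"
proof
  fix e assume "e \<in> supp (Bmul a u v)"
  then have "e \<in> classes" and "(\<Sum>c\<in>supp u. \<Sum>d\<in>supp v. u c * v d * of_nat (a c d e)) \<noteq> 0"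
    by (auto simp: supp_def Bmul_def split: if_splits)
  then obtain c d where "c \<in> supp u" "d \<in> supp v" "u c * v d * of_nat (a c d e) \<noteq> 0"
    by (meson sum.not_neutral_contains_not_neutral)
  then have "c \<in> supp u" "d \<in> supp v" "e \<in> supp (a c d)" by (auto simp: supp_def)
  then show "e \<in> (\<Union>c\<in>supp u. \<Union>d\<in>supp v. supp (a c d))" by blast
qed

lemma Bmul_in_Bspace:
  assumes "\<And>c d. finite (supp (a c d))" "u \<in> Bspace" "v \<in> Bspace"
  shows "Bmul a u v \<in> Bspace"
proof -
  have "finite (\<Union>c\<in>supp u. \<Union>d\<in>supp v. supp (a c d))"
    using assms by (simp add: Bspace_iff)
  then have "finite (supp (Bmul a u v))"
    using supp_Bmul_subset by (rule finite_subset[rotated])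
  moreover have "supp (Bmul a u v) \<subseteq> classes"
    by (auto simp: supp_def Bmul_def split: if_splits)
  ultimately show ?thesis by (simp add: Bspace_iff)
qed

lemma Bmul_Bmul_left:
  assumes fin: "\<And>c d. finite (supp (a c d))" and cls: "\<And>c d. supp (a c d) \<subseteq> classes"
    and u: "u \<in> Bspace" and v: "v \<in> Bspace" and e: "e \<in> classes"
  shows "Bmul a (Bmul a u v) w e = (\<Sum>c\<in>supp u. \<Sum>d\<in>supp v. \<Sum>f\<in>supp w.
      u c * v d * w f * of_nat (\<Sum>e'\<in>supp (a c d). a c d e' * a e' f e))"
proof -
  let ?P = "\<Union>c\<in>supp u. \<Union>d\<in>supp v. supp (a c d)"
  let ?T = "\<lambda>c d f e'. u c * v d * w f * (of_nat (a c d e') * of_nat (a e' f e))"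
  have P: "finite ?P" using u v fin by (simp add: Bspace_iff)
  have "Bmul a (Bmul a u v) w e = (\<Sum>e'\<in>?P. \<Sum>f\<in>supp w. Bmul a u v e' * w f * of_nat (a e' f e))"
    unfolding Bmul_apply[OF e]
    by (rule sum.mono_neutral_left[OF P supp_Bmul_subset]) (simp add: supp_def)
  also have "\<dots> = (\<Sum>e'\<in>?P. \<Sum>c\<in>supp u. \<Sum>d\<in>supp v. \<Sum>f\<in>supp w. ?T c d f e')"
  proof (rule sum.cong[OF refl])
    fix e' assume "e' \<in> ?P"
    then have "e' \<in> classes" using cls by blast
    then have "(\<Sum>f\<in>supp w. Bmul a u v e' * w f * of_nat (a e' f e))
        = (\<Sum>f\<in>supp w. \<Sum>c\<in>supp u. \<Sum>d\<in>supp v. ?T c d f e')"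
      by (simp add: Bmul_apply sum_distrib_left sum_distrib_right mult_ac)
    also have "\<dots> = (\<Sum>c\<in>supp u. \<Sum>d\<in>supp v. \<Sum>f\<in>supp w. ?T c d f e')"
      by (rule sum_swap_outer_innermost)
    finally show "(\<Sum>f\<in>supp w. Bmul a u v e' * w f * of_nat (a e' f e))
        = (\<Sum>c\<in>supp u. \<Sum>d\<in>supp v. \<Sum>f\<in>supp w. ?T c d f e')" .
  qed
  also have "\<dots> = (\<Sum>c\<in>supp u. \<Sum>d\<in>supp v. \<Sum>e'\<in>?P. \<Sum>f\<in>supp w. ?T c d f e')"
    by (rule sum_swap_outer_innermost)
  also have "\<dots> = (\<Sum>c\<in>supp u. \<Sum>d\<in>supp v. \<Sum>f\<in>supp w. \<Sum>e'\<in>?P. ?T c d f e')"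
    by (intro sum.cong refl sum.swap)
  also have "\<dots> = (\<Sum>c\<in>supp u. \<Sum>d\<in>supp v. \<Sum>f\<in>supp w.
      u c * v d * w f * of_nat (\<Sum>e'\<in>supp (a c d). a c d e' * a e' f e))"
  proof (intro sum.cong refl)
    fix c d f assume "c \<in> supp u" "d \<in> supp v"
    then have "(\<Sum>e'\<in>?P. a c d e' * a e' f e) = (\<Sum>e'\<in>supp (a c d). a c d e' * a e' f e)"
      by (intro sum_supp_superset P) blast
    moreover have "(\<Sum>e'\<in>?P. ?T c d f e') = u c * v d * w f * of_nat (\<Sum>e'\<in>?P. a c d e' * a e' f e)"
      by (simp add: sum_distrib_left)
    ultimately show "(\<Sum>e'\<in>?P. ?T c d f e')
        = u c * v d * w f * of_nat (\<Sum>e'\<in>supp (a c d). a c d e' * a e' f e)"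
      by simp
  qed
  finally show ?thesis .
qed

lemma Bmul_Bmul_right:
  assumes fin: "\<And>c d. finite (supp (a c d))" and cls: "\<And>c d. supp (a c d) \<subseteq> classes"
    and v: "v \<in> Bspace" and w: "w \<in> Bspace" and e: "e \<in> classes"
  shows "Bmul a u (Bmul a v w) e = (\<Sum>c\<in>supp u. \<Sum>d\<in>supp v. \<Sum>f\<in>supp w.
      u c * v d * w f * of_nat (\<Sum>d'\<in>supp (a d f). a d f d' * a c d' e))"
proof -
  let ?Q = "\<Union>d\<in>supp v. \<Union>f\<in>supp w. supp (a d f)"
  let ?T = "\<lambda>c d f d'. u c * v d * w f * (of_nat (a d f d') * of_nat (a c d' e))"
  have Q: "finite ?Q" using v w fin by (simp add: Bspace_iff)
  have "Bmul a u (Bmul a v w) e = (\<Sum>c\<in>supp u. \<Sum>d'\<in>?Q. u c * Bmul a v w d' * of_nat (a c d' e))"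
    unfolding Bmul_apply[OF e]
    by (rule sum.cong[OF refl], rule sum.mono_neutral_left[OF Q supp_Bmul_subset]) (simp add: supp_def)
  also have "\<dots> = (\<Sum>c\<in>supp u. \<Sum>d'\<in>?Q. \<Sum>d\<in>supp v. \<Sum>f\<in>supp w. ?T c d f d')"
  proof (intro sum.cong refl)
    fix c d' assume "d' \<in> ?Q"
    then have "d' \<in> classes" using cls by blast
    then show "u c * Bmul a v w d' * of_nat (a c d' e) = (\<Sum>d\<in>supp v. \<Sum>f\<in>supp w. ?T c d f d')"
      by (simp add: Bmul_apply sum_distrib_left sum_distrib_right mult_ac)
  qed
  also have "\<dots> = (\<Sum>c\<in>supp u. \<Sum>d\<in>supp v. \<Sum>f\<in>supp w. \<Sum>d'\<in>?Q. ?T c d f d')"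
    by (intro sum.cong refl sum_swap_outer_innermost)
  also have "\<dots> = (\<Sum>c\<in>supp u. \<Sum>d\<in>supp v. \<Sum>f\<in>supp w.
      u c * v d * w f * of_nat (\<Sum>d'\<in>supp (a d f). a d f d' * a c d' e))"
  proof (intro sum.cong refl)
    fix c d f assume "d \<in> supp v" "f \<in> supp w"
    then have "(\<Sum>d'\<in>?Q. a d f d' * a c d' e) = (\<Sum>d'\<in>supp (a d f). a d f d' * a c d' e)"
      by (intro sum_supp_superset Q) blast
    moreover have "(\<Sum>d'\<in>?Q. ?T c d f d') = u c * v d * w f * of_nat (\<Sum>d'\<in>?Q. a d f d' * a c d' e)"
      by (simp add: sum_distrib_left)
    ultimately show "(\<Sum>d'\<in>?Q. ?T c d f d')
        = u c * v d * w f * of_nat (\<Sum>d'\<in>supp (a d f). a d f d' * a c d' e)"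
      by simp
  qed
  finally show ?thesis .
qed

lemma Bmul_assoc:
  assumes fin: "\<And>c d. finite (supp (a c d))" and cls: "\<And>c d. supp (a c d) \<subseteq> classes"
    and assoc: "\<And>c d f e. c \<in> classes \<Longrightarrow> d \<in> classes \<Longrightarrow> f \<in> classes \<Longrightarrow>
      (\<Sum>e'\<in>supp (a c d). a c d e' * a e' f e) = (\<Sum>d'\<in>supp (a d f). a d f d' * a c d' e)"
    and u: "u \<in> Bspace" and v: "v \<in> Bspace" and w: "w \<in> Bspace"
  shows "Bmul a (Bmul a u v) w = Bmul a u (Bmul a v w)"
proof
  fix e
  show "Bmul a (Bmul a u v) w e = Bmul a u (Bmul a v w) e"
  proof (cases "e \<in> classes")
    case True
    have "(\<Sum>e'\<in>supp (a c d). a c d e' * a e' f e) = (\<Sum>d'\<in>supp (a d f). a d f d' * a c d' e)"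
      if "c \<in> supp u" "d \<in> supp v" "f \<in> supp w" for c d f
      using that u v w by (intro assoc) (auto simp: Bspace_iff)
    then show ?thesis
      unfolding Bmul_Bmul_left[OF fin cls u v True] Bmul_Bmul_right[OF fin cls v w True]
      by (intro sum.cong refl) simp
  next
    case False
    then show ?thesis by (simp add: Bmul_def)
  qed
qed

lemma Bmul_Bbasis: "Bmul a (Bbasis c) (Bbasis d) = (\<lambda>e. if e \<in> classes then of_nat (a c d e) else 0)"
proof -
  have "{c'. Bbasis c c' \<noteq> 0} = {c}" "{d'. Bbasis d d' \<noteq> 0} = {d}"
    by (auto simp: Bbasis_def)
  note supp_Bbasis = this
  show ?thesis unfolding Bmul_def supp_Bbasis by (rule ext) (simp add: Bbasis_def)
qed

theorem theorem1p1:
  "\<exists>a :: cls \<Rightarrow> cls \<Rightarrow> cls \<Rightarrow> nat.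
     (\<forall>c\<in>classes. \<forall>d\<in>classes. finite {e\<in>classes. a c d e \<noteq> 0}) \<and>
     (\<forall>N. \<forall>c\<in>classes. \<forall>d\<in>classes.
        conv N (AN N c) (AN N d) =
        (\<lambda>x. \<Sum>e\<in>{e\<in>classes. a c d e \<noteq> 0}. of_nat (a c d e) * AN N e x)) \<and>
     (\<forall>c\<in>classes. \<forall>d\<in>classes.
        Bmul a (Bbasis c) (Bbasis d) = (\<lambda>e. if e \<in> classes then of_nat (a c d e) else 0)) \<and>
     (\<forall>u\<in>Bspace. \<forall>v\<in>Bspace. Bmul a u v \<in> Bspace) \<and>
     (\<forall>u\<in>Bspace. \<forall>v\<in>Bspace. \<forall>w\<in>Bspace.
        Bmul a (Bmul a u v) w = Bmul a u (Bmul a v w))"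
proof (intro exI[of _ struct_const] conjI ballI allI)
  fix c d
  show "finite {e \<in> classes. struct_const c d e \<noteq> 0}"
    using finite_supp_struct_const by (simp add: supp_struct_const_eq)
  show "Bmul struct_const (Bbasis c) (Bbasis d)
      = (\<lambda>e. if e \<in> classes then of_nat (struct_const c d e) else 0)"
    by (rule Bmul_Bbasis)
next
  fix N c d assume "c \<in> classes" "d \<in> classes"
  then show "conv N (AN N c) (AN N d) =
      (\<lambda>x. \<Sum>e\<in>{e \<in> classes. struct_const c d e \<noteq> 0}. of_nat (struct_const c d e) * AN N e x)"
    by (simp add: conv_AN_eq_sum_supp supp_struct_const_eq)
next
  fix u v assume "u \<in> Bspace" "v \<in> Bspace"
  then show "Bmul struct_const u v \<in> Bspace"
    by (rule Bmul_in_Bspace[where a = struct_const, OF finite_supp_struct_const])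
next
  fix u v w assume "u \<in> Bspace" "v \<in> Bspace" "w \<in> Bspace"
  with struct_const_assoc
  show "Bmul struct_const (Bmul struct_const u v) w = Bmul struct_const u (Bmul struct_const v w)"
    by (rule Bmul_assoc[where a = struct_const,
          OF finite_supp_struct_const supp_struct_const_subset_classes])
qed

end
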